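(* Let $D\ge 3$ be an integer and let $\mathcal{M}$ be a connected ciliated $D$-edge-colored map (as defined in the context) with $V(\mathcal{M})$ vertices and $E(\mathcal{M})$ edges. Let $F_{\mathrm{int}}(\mathcal{M})=\sum_{c=1}^D F^c_{\mathrm{int}}(\mathcal{M})$ be its total number of internal faces, let $\mathcal{B}=\partial\mathcal{M}$ be its boundary graph, let $p(\mathcal{B})$ be the number of cilia of $\mathcal{M}$ (equivalently the number of black vertices of $\mathcal{B}$), and let $\rho(\mathcal{B})$ be the number of connected components of $\mathcal{B}$ (with $\rho(\mathcal{B})=0$ if $\mathcal{M}$ has no cilium). Then $$-(D-1)\,E(\mathcal{M}) + F_{\mathrm{int}}(\mathcal{M}) \;\le\; D - (D-1)\,p(\mathcal{B}) - \rho(\mathcal{B}) - (D-2)\bigl[E(\mathcal{M}) - V(\mathcal{M}) + 1\bigr].$$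
   Context: A ciliated $D$-edge-colored map is a finite connected combinatorial map (a graph, loops and multiple edges allowed, together with a cyclic clockwise ordering of the half-edges around each vertex) in which every edge carries a color in $\{1,\dots,D\}$, and in which some vertices (each at most once) carry a marker called a cilium. A corner is the portion of a vertex between two consecutive half-edges in the cyclic order (an isolated vertex without edges has a single corner); a cilium is placed inside a corner and splits it into two corners, so the map has $2E(\mathcal{M})+p$ corners where $p$ is the number of cilia. For a color $c$, $\mathcal{M}_c$ denotes the submap obtained by deleting all edges of colors different from $c$ (all vertices, cilia and their positions are kept, with the induced cyclic orders). The faces of color $c$ of $\mathcal{M}$ are the faces of $\mathcal{M}_c$, traversed clockwise by alternately following corners and edges of color $c$; a face is internal if it is a closed cycle that never meets a cilium, and external if it is an open path that starts right after one cilium (the source) and ends when it reaches a cilium (the target), possibly the same one. Thus there are exactly $p$ external faces of each color. $F^c_{\mathrm{int}}(\mathcal{M})$ is the number of internal faces of color $c$. The boundary graph $\partial\mathcal{M}$ is the bipartite $D$-edge-colored graph having one white and one black vertex for each cilium, and, for each external face of color $c$ going from source cilium $i$ to target cilium $j$, an edge of color $c$ joining the white vertex of $i$ to the black vertex of $j$; it is $D$-regular with $p$ black vertices. *)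

theory Defs
  imports Main
begin

text \<open>
  Items of type 'a are half-edges (set cm_half) and cilia (set cm_cilia).
  cm_rot is the clockwise successor permutation of the items around each vertex;
  the items at a vertex form exactly one cycle of cm_rot, and cm_vx gives the vertex
  of an item.  Vertices (set cm_verts) carrying no item are isolated uncilated vertices.
  cm_inv is the fixed-point-free involution on half-edges pairing them into edges,
  cm_col gives the colour of a half-edge (constant on edges).
\<close>

record ('a, 'v) cmap =
  cm_half  :: "'a set"
  cm_cilia :: "'a set"
  cm_verts :: "'v set"
  cm_vx    :: "'a \<Rightarrow> 'v"
  cm_rot   :: "'a \<Rightarrow> 'a"
  cm_inv   :: "'a \<Rightarrow> 'a"
  cm_col   :: "'a \<Rightarrow> nat"

definition cm_items :: "('a, 'v) cmap \<Rightarrow> 'a set" where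
  "cm_items M = cm_half M \<union> cm_cilia M"

definition cmap_edge_rel :: "('a, 'v) cmap \<Rightarrow> ('v \<times> 'v) set" where
  "cmap_edge_rel M = {(cm_vx M h, cm_vx M (cm_inv M h)) | h. h \<in> cm_half M}"

definition ciliated_map :: "nat \<Rightarrow> ('a, 'v) cmap \<Rightarrow> bool" where
  "ciliated_map D M \<longleftrightarrow>
     finite (cm_half M) \<and> finite (cm_cilia M) \<and> finite (cm_verts M) \<and>
     cm_half M \<inter> cm_cilia M = {} \<and>
     (\<forall>x \<in> cm_items M. cm_vx M x \<in> cm_verts M) \<and>
     bij_betw (cm_rot M) (cm_items M) (cm_items M) \<and>
     (\<forall>x \<in> cm_items M. \<forall>y \<in> cm_items M.
         cm_vx M x = cm_vx M y \<longleftrightarrow> (\<exists>n. (cm_rot M ^^ n) x = y)) \<and>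
     (\<forall>x \<in> cm_cilia M. \<forall>y \<in> cm_cilia M. cm_vx M x = cm_vx M y \<longrightarrow> x = y) \<and>
     (\<forall>h \<in> cm_half M. cm_inv M h \<in> cm_half M \<and> cm_inv M h \<noteq> h \<and>
         cm_inv M (cm_inv M h) = h) \<and>
     (\<forall>h \<in> cm_half M. cm_col M h \<in> {1..D} \<and> cm_col M (cm_inv M h) = cm_col M h)"

definition connected_cmap :: "('a, 'v) cmap \<Rightarrow> bool" where
  "connected_cmap M \<longleftrightarrow> cm_verts M \<noteq> {} \<and>
     (\<forall>u \<in> cm_verts M. \<forall>v \<in> cm_verts M. (u, v) \<in> (cmap_edge_rel M)\<^sup>*)"

definition nV :: "('a, 'v) cmap \<Rightarrow> nat" where "nV M = card (cm_verts M)"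
definition nE :: "('a, 'v) cmap \<Rightarrow> nat" where "nE M = card (cm_half M) div 2"
definition nP :: "('a, 'v) cmap \<Rightarrow> nat" where "nP M = card (cm_cilia M)"

text \<open>Half-edges of colour c, and the rotation of the submap M_c (restricted to
  half-edges of colour c and cilia).\<close>
definition half_col :: "('a, 'v) cmap \<Rightarrow> nat \<Rightarrow> 'a set" where
  "half_col M c = {h \<in> cm_half M. cm_col M h = c}"

definition rot_col :: "('a, 'v) cmap \<Rightarrow> nat \<Rightarrow> 'a \<Rightarrow> 'a" where
  "rot_col M c x =
     (cm_rot M ^^ (LEAST k. 0 < k \<and> (cm_rot M ^^ k) x \<in> half_col M c \<union> cm_cilia M)) x"

text \<open>Face step of colour c: from a half-edge h (arriving at the vertex of the opposite
  half-edge) go to the next item clockwise in M_c; from a cilium go to the next item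
  clockwise in M_c.  Faces of colour c are the orbits of this map on the half-edges
  of colour c and the cilia; internal faces are the orbits meeting no cilium.\<close>
definition face_step :: "('a, 'v) cmap \<Rightarrow> nat \<Rightarrow> 'a \<Rightarrow> 'a" where
  "face_step M c x = rot_col M c (if x \<in> cm_cilia M then x else cm_inv M x)"

definition face_orbit :: "('a, 'v) cmap \<Rightarrow> nat \<Rightarrow> 'a \<Rightarrow> 'a set" where
  "face_orbit M c x = {(face_step M c ^^ n) x | n. True}"

text \<open>Vertices with no half-edge of colour c and no cilium: isolated in M_c, each
  forming a single (internal) face of colour c.\<close>
definition isolated_col :: "('a, 'v) cmap \<Rightarrow> nat \<Rightarrow> 'v set" where
  "isolated_col M c = {v \<in> cm_verts M. \<not> (\<exists>x \<in> half_col M c \<union> cm_cilia M. cm_vx M x = v)}"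

definition F_int_col :: "('a, 'v) cmap \<Rightarrow> nat \<Rightarrow> nat" where
  "F_int_col M c =
     card {face_orbit M c h | h. h \<in> half_col M c \<and> face_orbit M c h \<inter> cm_cilia M = {}}
     + card (isolated_col M c)"

definition F_int :: "nat \<Rightarrow> ('a, 'v) cmap \<Rightarrow> nat" where
  "F_int D M = (\<Sum>c = 1..D. F_int_col M c)"

text \<open>Target cilium of the external face of colour c whose source is cilium i.\<close>
definition face_target :: "('a, 'v) cmap \<Rightarrow> nat \<Rightarrow> 'a \<Rightarrow> 'a" where
  "face_target M c i =
     (face_step M c ^^ (LEAST k. 0 < k \<and> (face_step M c ^^ k) i \<in> cm_cilia M)) i"

text \<open>Boundary graph: white vertices Inl i, black vertices Inr i (i a cilium); an edge of
  colour c joins Inl i and Inr (face_target M c i).  Only connectivity matters here.\<close>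
definition bdry_verts :: "('a, 'v) cmap \<Rightarrow> ('a + 'a) set" where
  "bdry_verts M = Inl ` cm_cilia M \<union> Inr ` cm_cilia M"

definition bdry_adj :: "nat \<Rightarrow> ('a, 'v) cmap \<Rightarrow> (('a + 'a) \<times> ('a + 'a)) set" where
  "bdry_adj D M = {(Inl i, Inr (face_target M c i)) | i c. i \<in> cm_cilia M \<and> c \<in> {1..D}}
                \<union> {(Inr (face_target M c i), Inl i) | i c. i \<in> cm_cilia M \<and> c \<in> {1..D}}"

definition bdry_components :: "nat \<Rightarrow> ('a, 'v) cmap \<Rightarrow> nat" where
  "bdry_components D M = card (bdry_verts M // ((bdry_adj D M)\<^sup>* \<inter> (bdry_verts M \<times> bdry_verts M)))"

end

theory Submission
  imports Defs
begin

text \<open>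
  For a set S of half-edges closed under the edge involution consider the map M_S in which
  only the edges inside S are glued and all other edges are cut into dangling half-edges.  Its
  faces of all colours are assembled into one "face graph": half-edges are nodes, each cilium is
  split into a source and a target node, and each face step is an arc.  Its components are the
  components of the boundary graph of M_S together with the internal faces.  The potential
  defect S = E(M_S) + (D-2) V + 2 (vertex components of M_S) - (D-1) p - (face-graph components)
  - (isolated vertices of the coloured submaps) vanishes for S = {} by direct counting, and never
  decreases when an edge is glued: gluing merges at most one pair of face components, and exactly
  one pair when it also merges two vertex components.  The latter uses a flow-balance argument:
  as every colour enters and leaves each half-edge node once, no arc of the face graph is a
  bridge when D >= 2.  Evaluating defect H >= 0 for the full map gives the theorem.
\<close>

section \<open>Iterates, orbits and first-return maps\<close>

lemma funpow_in_set:
  assumes "\<And>y. y \<in> A \<Longrightarrow> f y \<in> A" "x \<in> A"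
  shows "(f ^^ n) x \<in> A"
  using assms by (induction n) auto

lemma funpow_cong_on:
  assumes "\<And>y. y \<in> A \<Longrightarrow> f y \<in> A" "\<And>y. y \<in> A \<Longrightarrow> f y = g y" "x \<in> A"
  shows "(f ^^ n) x = (g ^^ n) x"
proof (induction n)
  case (Suc n)
  have "(f ^^ n) x \<in> A" using funpow_in_set[OF assms(1,3)] .
  then show ?case using Suc assms(2) by simp
qed simp

lemma funpow_diff:
  assumes "m \<le> n" shows "(f ^^ (n - m)) ((f ^^ m) x) = (f ^^ n) x"
proof -
  have "(f ^^ ((n - m) + m)) x = (f ^^ (n - m)) ((f ^^ m) x)" by (simp add: funpow_add)
  then show ?thesis using assms by simp
qed

lemma permutation_periodic:
  assumes "bij_betw f A A" "finite A" "x \<in> A"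
  shows "\<exists>n>0. (f ^^ n) x = x"
proof -
  have into: "\<And>y. y \<in> A \<Longrightarrow> f y \<in> A" using assms(1) bij_betwE by blast
  let ?g = "\<lambda>n. (f ^^ n) x"
  have "?g ` {..card A} \<subseteq> A" using funpow_in_set[OF into assms(3)] by auto
  then have "card (?g ` {..card A}) \<le> card A" by (rule card_mono[OF assms(2)])
  then have "card (?g ` {..card A}) < card {..card A}" by simp
  then have "\<not> inj_on ?g {..card A}" by (rule pigeonhole)
  then obtain i j where ij: "i < j" "?g i = ?g j"
  proof -
    obtain i j where "i \<le> card A" "j \<le> card A" "i \<noteq> j" "?g i = ?g j"
      using \<open>\<not> inj_on ?g {..card A}\<close> unfolding inj_on_def by auto
    then show ?thesis using that[of "min i j" "max i j"] by (cases "i < j") (auto simp: min_def max_def)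
  qed
  have "(f ^^ i) ((f ^^ (j - i)) x) = (f ^^ (i + (j - i))) x" by (simp only: funpow_add o_apply)
  then have "(f ^^ i) ((f ^^ (j - i)) x) = (f ^^ j) x" using ij(1) by simp
  then have "(f ^^ i) ((f ^^ (j - i)) x) = (f ^^ i) x" using ij(2) by simp
  moreover have "inj_on (f ^^ i) A" using bij_betw_funpow[OF assms(1)] bij_betw_def by blast
  moreover have "(f ^^ (j - i)) x \<in> A" using funpow_in_set[OF into assms(3)] .
  ultimately have "(f ^^ (j - i)) x = x" using assms(3) by (auto dest: inj_onD)
  then show ?thesis using ij(1) by (intro exI[of _ "j - i"]) auto
qed

definition orbit :: "('a \<Rightarrow> 'a) \<Rightarrow> 'a \<Rightarrow> 'a set" where
  "orbit f x = {(f ^^ n) x | n. True}"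

lemma orbit_self: "x \<in> orbit f x"
  unfolding orbit_def by (auto intro: exI[of _ 0])

lemma orbit_step: "f x \<in> orbit f x"
  unfolding orbit_def by (auto intro: exI[of _ 1])

lemma orbit_trans:
  assumes "y \<in> orbit f x" "z \<in> orbit f y" shows "z \<in> orbit f x"
proof -
  obtain n m where "y = (f ^^ n) x" "z = (f ^^ m) y" using assms unfolding orbit_def by auto
  then have "z = (f ^^ (m + n)) x" by (simp add: funpow_add)
  then show ?thesis unfolding orbit_def by blast
qed

lemma orbit_subset:
  assumes "\<And>y. y \<in> A \<Longrightarrow> f y \<in> A" "x \<in> A"
  shows "orbit f x \<subseteq> A"
  unfolding orbit_def using funpow_in_set[OF assms] by auto

lemma orbit_sym:
  assumes "bij_betw f A A" "finite A" "x \<in> A" "y \<in> orbit f x"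
  shows "x \<in> orbit f y"
proof -
  obtain n where n: "0 < n" "(f ^^ n) x = x" using permutation_periodic[OF assms(1-3)] by blast
  obtain m where m: "y = (f ^^ m) x" using assms(4) unfolding orbit_def by auto
  have period: "(f ^^ (n * k)) x = x" for k
    by (induction k) (simp_all add: funpow_add n(2))
  have "1 * Suc m \<le> n * Suc m" using n(1) by (intro mult_le_mono1) simp
  then have "m \<le> n * Suc m" by simp
  then have "(f ^^ (n * Suc m - m)) y = x" using m period[of "Suc m"] by (simp add: funpow_diff)
  then show ?thesis unfolding orbit_def by blast
qed

lemma orbit_eq:
  assumes "bij_betw f A A" "finite A" "x \<in> A" "y \<in> orbit f x"
  shows "orbit f y = orbit f x"
  using orbit_trans[OF assms(4)] orbit_trans[OF orbit_sym[OF assms]] by blast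

text \<open>This is how the rotation of the coloured submap \<open>M\<^sub>c\<close> and the targets of external faces
  are obtained from the rotation and face permutations.\<close>

definition return_time :: "('a \<Rightarrow> 'a) \<Rightarrow> 'a set \<Rightarrow> 'a \<Rightarrow> nat" where
  "return_time f Y x = (LEAST k. 0 < k \<and> (f ^^ k) x \<in> Y)"

definition first_return :: "('a \<Rightarrow> 'a) \<Rightarrow> 'a set \<Rightarrow> 'a \<Rightarrow> 'a" where
  "first_return f Y x = (f ^^ (LEAST k. 0 < k \<and> (f ^^ k) x \<in> Y)) x"

lemma first_return_time: "first_return f Y x = (f ^^ return_time f Y x) x"
  by (simp add: first_return_def return_time_def)

lemma return_time_props:
  assumes "\<exists>k>0. (f ^^ k) x \<in> Y"
  shows "0 < return_time f Y x" "(f ^^ return_time f Y x) x \<in> Y"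
    "\<And>j. 0 < j \<Longrightarrow> j < return_time f Y x \<Longrightarrow> (f ^^ j) x \<notin> Y"
proof -
  have "0 < return_time f Y x \<and> (f ^^ return_time f Y x) x \<in> Y"
    unfolding return_time_def by (rule LeastI_ex) (use assms in auto)
  then show "0 < return_time f Y x" "(f ^^ return_time f Y x) x \<in> Y" by auto
  fix j assume "0 < j" "j < return_time f Y x"
  then show "(f ^^ j) x \<notin> Y" unfolding return_time_def using not_less_Least by blast
qed

lemma return_time_le:
  assumes "0 < k" "(f ^^ k) x \<in> Y"
  shows "return_time f Y x \<le> k"
  unfolding return_time_def by (rule Least_le) (use assms in simp)

lemma permutation_returns:
  assumes "bij_betw f A A" "finite A" "x \<in> Y" "Y \<subseteq> A"
  shows "\<exists>k>0. (f ^^ k) x \<in> Y"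
proof -
  obtain n where "0 < n" "(f ^^ n) x = x" using permutation_periodic[OF assms(1,2)] assms(3,4) by blast
  then show ?thesis using assms(3) by auto
qed

lemma first_return_in:
  assumes "\<exists>k>0. (f ^^ k) x \<in> Y"
  shows "first_return f Y x \<in> Y"
  using return_time_props[OF assms] by (simp add: first_return_time)

lemma first_return_one:
  assumes "f x \<in> Y" shows "first_return f Y x = f x"
proof -
  have "\<exists>k>0. (f ^^ k) x \<in> Y" using assms by (intro exI[of _ 1]) simp
  then have "0 < return_time f Y x" by (rule return_time_props(1))
  moreover have "return_time f Y x \<le> 1" using return_time_le[of 1 f x Y] assms by simp
  ultimately have "return_time f Y x = 1" by simp
  then show ?thesis by (simp add: first_return_time)
qed

lemma first_return_step:
  assumes ex: "\<exists>k>0. (f ^^ k) x \<in> Y" and fx: "f x \<notin> Y"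
  shows "first_return f Y (f x) = first_return f Y x"
proof -
  have r: "0 < return_time f Y x" "(f ^^ return_time f Y x) x \<in> Y" using return_time_props[OF ex] by auto
  have "return_time f Y x \<noteq> 1" using r(2) fx by auto
  then obtain m where m: "0 < m" "return_time f Y x = Suc m" using r(1)
    by (cases "return_time f Y x") (auto intro!: gr0I)
  have shift: "(f ^^ Suc k) x = (f ^^ k) (f x)" for k by (simp only: funpow_Suc_right comp_apply)
  have m_in: "(f ^^ m) (f x) \<in> Y" using r(2) unfolding m(2) shift .
  then have ex': "\<exists>k>0. (f ^^ k) (f x) \<in> Y" using m(1) by blast
  have "return_time f Y (f x) = m"
  proof (rule antisym)
    show "return_time f Y (f x) \<le> m" using return_time_le[OF m(1) m_in] .
    have "(f ^^ Suc (return_time f Y (f x))) x \<in> Y" unfolding shift using return_time_props(2)[OF ex'] .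
    then show "m \<le> return_time f Y (f x)"
      using return_time_props(3)[OF ex, of "Suc (return_time f Y (f x))"] m(2) by linarith
  qed
  then show ?thesis using shift r m by (simp add: first_return_time)
qed

text \<open>Two points of \<open>Y\<close> with the same first return must coincide: otherwise the one with
  the longer return time would pass through the other before returning.\<close>

lemma first_return_inj_aux:
  assumes f: "bij_betw f A A" "finite A" "Y \<subseteq> A" and xy: "x \<in> Y" "y \<in> Y"
    and eq: "first_return f Y x = first_return f Y y"
    and lt: "return_time f Y x < return_time f Y y"
  shows False
proof -
  have into: "\<And>z. z \<in> A \<Longrightarrow> f z \<in> A" using f(1) bij_betwE by blast
  have ex: "\<exists>k>0. (f ^^ k) y \<in> Y" using permutation_returns[OF f(1,2) xy(2) f(3)] .
  have exx: "\<exists>k>0. (f ^^ k) x \<in> Y" using permutation_returns[OF f(1,2) xy(1) f(3)] .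
  define d where "d = return_time f Y y - return_time f Y x"
  have "(f ^^ return_time f Y x) ((f ^^ d) y) = (f ^^ (return_time f Y x + d)) y"
    by (simp add: funpow_add)
  also have "\<dots> = (f ^^ return_time f Y y) y" using lt by (simp add: d_def)
  also have "\<dots> = (f ^^ return_time f Y x) x" using eq by (simp add: first_return_time)
  finally have same: "(f ^^ return_time f Y x) ((f ^^ d) y) = (f ^^ return_time f Y x) x" .
  have "y \<in> A" "x \<in> A" using xy f(3) by auto
  then have "(f ^^ d) y = x"
    using same bij_betw_funpow[OF f(1)] funpow_in_set[OF into \<open>y \<in> A\<close>]
    unfolding bij_betw_def by (blast dest: inj_onD)
  moreover have "0 < d" "d < return_time f Y y" using lt return_time_props(1)[OF exx]
    by (auto simp: d_def)
  ultimately show False using return_time_props(3)[OF ex] xy(1) by blast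
qed

lemma first_return_bij:
  assumes "bij_betw f A A" "finite A" "Y \<subseteq> A"
  shows "bij_betw (first_return f Y) Y Y"
proof -
  have maps: "first_return f Y ` Y \<subseteq> Y"
  proof
    fix z assume "z \<in> first_return f Y ` Y"
    then obtain x where "x \<in> Y" "z = first_return f Y x" by blast
    then show "z \<in> Y" using first_return_in[OF permutation_returns[OF assms(1,2) _ assms(3)]] by simp
  qed
  have inj: "inj_on (first_return f Y) Y"
  proof (rule inj_onI)
    fix x y assume xy: "x \<in> Y" "y \<in> Y" and eq: "first_return f Y x = first_return f Y y"
    show "x = y"
    proof (cases rule: linorder_cases[of "return_time f Y x" "return_time f Y y"])
      case less then show ?thesis using first_return_inj_aux[OF assms xy eq] by simp
    next
      case greater then show ?thesis using first_return_inj_aux[OF assms xy(2,1) eq[symmetric]] by simp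
    next
      case equal
      have "inj_on (f ^^ return_time f Y x) A" using bij_betw_funpow[OF assms(1)] bij_betw_def by blast
      moreover have "(f ^^ return_time f Y x) x = (f ^^ return_time f Y x) y"
        using eq equal by (simp add: first_return_time)
      ultimately show ?thesis using xy assms(3) by (blast dest: inj_onD)
    qed
  qed
  have "finite Y" using assms(2,3) finite_subset by blast
  then have "first_return f Y ` Y = Y" using endo_inj_surj maps inj by blast
  then show ?thesis using inj by (simp add: bij_betw_def)
qed

lemma first_return_in_orbit: "first_return f Y x \<in> orbit f x"
  unfolding first_return_def orbit_def by auto

lemma orbit_first_return:
  assumes f: "bij_betw f A A" "finite A" "Y \<subseteq> A" and x: "x \<in> Y"
  shows "orbit (first_return f Y) x = orbit f x \<inter> Y"
proof
  have into: "\<And>z. z \<in> Y \<Longrightarrow> first_return f Y z \<in> Y"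
    using bij_betwE[OF first_return_bij[OF f]] by blast
  have "(first_return f Y ^^ n) x \<in> orbit f x" for n
    by (induction n) (auto intro: orbit_self orbit_trans first_return_in_orbit)
  moreover have "orbit (first_return f Y) x \<subseteq> Y" by (rule orbit_subset[OF into x])
  ultimately show "orbit (first_return f Y) x \<subseteq> orbit f x \<inter> Y" unfolding orbit_def by blast
  have "(f ^^ m) x \<in> orbit (first_return f Y) x"
    if "x \<in> Y" "(f ^^ m) x \<in> Y" for m x
    using that
  proof (induction m arbitrary: x rule: less_induct)
    case (less m)
    show ?case
    proof (cases "m = 0")
      case True then show ?thesis using orbit_self by simp
    next
      case False
      have ex: "\<exists>k>0. (f ^^ k) x \<in> Y" using permutation_returns[OF f(1,2) less(2) f(3)] .
      define r where "r = return_time f Y x"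
      have r: "0 < r" "r \<le> m" using return_time_props(1)[OF ex] return_time_le[of m f x Y] False less(3)
        by (auto simp: r_def)
      have eq: "(f ^^ (m - r)) (first_return f Y x) = (f ^^ m) x"
        using r by (simp add: r_def first_return_time funpow_diff)
      have "(f ^^ (m - r)) (first_return f Y x) \<in> orbit (first_return f Y) (first_return f Y x)"
        using less(1)[of "m - r" "first_return f Y x"] r eq less(3) into[OF less(2)] by simp
      moreover have "first_return f Y x \<in> orbit (first_return f Y) x" by (rule orbit_step)
      ultimately show ?thesis using eq orbit_trans by fastforce
    qed
  qed
  then show "orbit f x \<inter> Y \<subseteq> orbit (first_return f Y) x"
    using x unfolding orbit_def by blast
qed

section \<open>Connected components of a symmetric relation\<close>

definition ncomp :: "'n set \<Rightarrow> ('n \<times> 'n) set \<Rightarrow> nat" where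
  "ncomp N R = card (N // (R\<^sup>* \<inter> N \<times> N))"

lemma rtrancl_sym: "sym R \<Longrightarrow> (x, y) \<in> R\<^sup>* \<Longrightarrow> (y, x) \<in> R\<^sup>*"
  using sym_rtrancl by (metis symD)

lemma equiv_connected:
  assumes "sym R" shows "equiv N (R\<^sup>* \<inter> N \<times> N)"
proof (rule equivI)
  show "sym (R\<^sup>* \<inter> N \<times> N)" using rtrancl_sym[OF assms] by (auto simp: sym_def)
qed (auto simp: refl_on_def trans_def)

lemma rtrancl_map:
  assumes "\<And>a b. (a, b) \<in> R \<Longrightarrow> (F a, F b) \<in> S\<^sup>*" "(x, y) \<in> R\<^sup>*"
  shows "(F x, F y) \<in> S\<^sup>*"
  using assms(2) by induction (auto intro: rtrancl_trans assms(1))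

lemma rtrancl_closed:
  assumes "\<And>a b. (a, b) \<in> R \<Longrightarrow> a \<in> T \<Longrightarrow> b \<in> T" "(x, y) \<in> R\<^sup>*" "x \<in> T"
  shows "y \<in> T"
  using assms(2,3) by induction (auto intro: assms(1))

text \<open>When the relation grows, every new component is the union of old ones: the map sending an
  old component to the new component containing it is onto.\<close>

lemma coarsen_class:
  assumes "R \<subseteq> R'" "x \<in> N"
  shows "(R'\<^sup>* \<inter> N \<times> N) `` ((R\<^sup>* \<inter> N \<times> N) `` {x}) = (R'\<^sup>* \<inter> N \<times> N) `` {x}"
proof -
  have "R\<^sup>* \<subseteq> R'\<^sup>*" using assms(1) rtrancl_mono by blast
  then show ?thesis using assms(2) by (auto intro: rtrancl_trans)
qed

lemma coarsen_quotient:
  assumes "R \<subseteq> R'"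
  shows "(\<lambda>Q. (R'\<^sup>* \<inter> N \<times> N) `` Q) ` (N // (R\<^sup>* \<inter> N \<times> N)) = N // (R'\<^sup>* \<inter> N \<times> N)"
  unfolding quotient_def image_UN image_insert image_empty using coarsen_class[OF assms] by simp

lemma ncomp_mono:
  assumes "sym R" "R \<subseteq> R'" "finite N"
  shows "ncomp N R' \<le> ncomp N R"
proof -
  have "finite (N // (R\<^sup>* \<inter> N \<times> N))" by (rule finite_quotient[OF assms(3)]) blast
  then show ?thesis unfolding ncomp_def coarsen_quotient[OF assms(2), symmetric]
    by (rule card_image_le)
qed

lemma rtrancl_add_edge:
  assumes "sym R"
  shows "(x, y) \<in> (R \<union> {(u, w), (w, u)})\<^sup>* \<longleftrightarrow>
    (x, y) \<in> R\<^sup>* \<or> ((x, u) \<in> R\<^sup>* \<and> (w, y) \<in> R\<^sup>*) \<or> ((x, w) \<in> R\<^sup>* \<and> (u, y) \<in> R\<^sup>*)"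
proof -
  have eq: "R \<union> {(u, w), (w, u)} = insert (u, w) (insert (w, u) R)" by blast
  have "(w, u) \<in> R\<^sup>* \<Longrightarrow> (u, w) \<in> R\<^sup>*" using rtrancl_sym[OF assms] .
  then show ?thesis unfolding eq rtrancl_insert by (auto intro: rtrancl_trans)
qed

lemma ncomp_add_conn:
  assumes "sym R" "(u, w) \<in> R\<^sup>*"
  shows "ncomp N (R \<union> {(u, w), (w, u)}) = ncomp N R"
proof -
  have "(R \<union> {(u, w), (w, u)})\<^sup>* = R\<^sup>*"
    using rtrancl_add_edge[OF assms(1)] assms rtrancl_sym[OF assms] by (auto intro: rtrancl_trans)
  then show ?thesis unfolding ncomp_def by simp
qed

lemma ncomp_add_disc:
  assumes sym: "sym R" and uw: "(u, w) \<notin> R\<^sup>*" and N: "u \<in> N" "w \<in> N" "finite N"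
  shows "ncomp N R = ncomp N (R \<union> {(u, w), (w, u)}) + 1"
proof -
  let ?R' = "R \<union> {(u, w), (w, u)}"
  let ?r = "R\<^sup>* \<inter> N \<times> N" and ?r' = "?R'\<^sup>* \<inter> N \<times> N"
  define F where "F Q = ?r' `` Q" for Q
  define Cu Cw where "Cu = ?r `` {u}" and "Cw = ?r `` {w}"
  let ?Q = "N // ?r"
  have F_class: "F (?r `` {x}) = ?r' `` {x}" if "x \<in> N" for x
    unfolding F_def by (rule coarsen_class[OF _ that]) blast
  have img: "F ` ?Q = N // ?r'" unfolding F_def by (rule coarsen_quotient) blast
  have Cu: "Cu \<in> ?Q" and Cw: "Cw \<in> ?Q" unfolding Cu_def Cw_def using N by (auto intro: quotientI)
  have "w \<notin> Cu" using uw unfolding Cu_def by blast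
  moreover have "w \<in> Cw" using N unfolding Cw_def by blast
  ultimately have CuCw: "Cu \<noteq> Cw" by blast
  have "sym ?R'" using sym unfolding sym_def by blast
  moreover have "(u, w) \<in> ?r'" using N by (simp add: r_into_rtrancl)
  ultimately have "F Cu = F Cw" unfolding Cu_def Cw_def F_class[OF N(1)] F_class[OF N(2)]
    by (rule equiv_class_eq[OF equiv_connected])
  text \<open>Away from \<open>Cw\<close> the map \<open>F\<close> is injective: two distinct old components that merge
    must be the components of \<open>u\<close> and \<open>w\<close>.\<close>
  have inj: "inj_on F (?Q - {Cw})"
  proof (rule inj_onI)
    fix X Y assume X: "X \<in> ?Q - {Cw}" and Y: "Y \<in> ?Q - {Cw}" and FXY: "F X = F Y"
    obtain x where x: "x \<in> N" "X = ?r `` {x}" using X by (auto elim: quotientE)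
    obtain y where y: "y \<in> N" "Y = ?r `` {y}" using Y by (auto elim: quotientE)
    have "?r' `` {x} = ?r' `` {y}" using FXY unfolding x(2) y(2) F_class[OF x(1)] F_class[OF y(1)] .
    then have "y \<in> ?r' `` {x}" using y(1) by blast
    then have "(x, y) \<in> ?R'\<^sup>*" by blast
    then consider "(x, y) \<in> R\<^sup>*" | "(w, y) \<in> R\<^sup>*" | "(x, w) \<in> R\<^sup>*"
      using rtrancl_add_edge[OF sym, of x y u w] by blast
    then show "X = Y"
    proof cases
      case 1
      then have "(x, y) \<in> ?r" using x y by blast
      then show ?thesis unfolding x(2) y(2) by (rule equiv_class_eq[OF equiv_connected[OF sym]])
    next
      case 2
      then have "(w, y) \<in> ?r" using y N by blast
      then have "Cw = Y" unfolding Cw_def y(2) by (rule equiv_class_eq[OF equiv_connected[OF sym]])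
      then show ?thesis using Y by blast
    next
      case 3
      then have "(x, w) \<in> ?r" using x N by blast
      then have "X = Cw" unfolding Cw_def x(2) by (rule equiv_class_eq[OF equiv_connected[OF sym]])
      then show ?thesis using X by blast
    qed
  qed
  have "F ` ?Q = insert (F Cw) (F ` (?Q - {Cw}))" using Cw by blast
  moreover have "Cu \<in> ?Q - {Cw}" using Cu CuCw by blast
  then have "F Cw \<in> F ` (?Q - {Cw})" unfolding \<open>F Cu = F Cw\<close>[symmetric] by (rule imageI)
  ultimately have "F ` ?Q = F ` (?Q - {Cw})" by (simp add: insert_absorb)
  then have "ncomp N ?R' = card (?Q - {Cw})" unfolding ncomp_def img[symmetric] using card_image[OF inj] by simp
  moreover have "finite ?Q" by (rule finite_quotient[OF N(3)]) blast
  then have "card (?Q - {Cw}) + 1 = card ?Q" using Cw by (metis Suc_eq_plus1 card_Suc_Diff1)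
  ultimately show ?thesis unfolding ncomp_def by simp
qed

lemma ncomp_connected:
  assumes "N \<noteq> {}" "\<forall>u \<in> N. \<forall>v \<in> N. (u, v) \<in> R\<^sup>*"
  shows "ncomp N R = 1"
proof -
  have "(R\<^sup>* \<inter> N \<times> N) `` {x} = N" if "x \<in> N" for x using assms(2) that by auto
  then have "N // (R\<^sup>* \<inter> N \<times> N) = {N}" using assms(1) unfolding quotient_def by auto
  then show ?thesis unfolding ncomp_def by simp
qed

lemma ncomp_empty: "finite N \<Longrightarrow> ncomp N {} = card N"
proof -
  assume "finite N"
  have "N // ({}\<^sup>* \<inter> N \<times> N) = (\<lambda>x. {x}) ` N" unfolding quotient_def by auto
  then show ?thesis unfolding ncomp_def by (simp add: card_image)
qed

lemma ncomp_matching: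
  assumes "finite A"
  shows "ncomp (Inl ` A \<union> Inr ` A) ({(Inl i, Inr i) | i. i \<in> A} \<union> {(Inr i, Inl i) | i. i \<in> A}) = card A"
proof -
  define R where "R = {(Inl i, Inr i) | i. i \<in> A} \<union> {(Inr i, Inl i) | i. i \<in> A}"
  define N where "N = Inl ` A \<union> Inr ` A"
  have cls: "(R\<^sup>* \<inter> N \<times> N) `` {n} = {Inl i, Inr i}" if "i \<in> A" "n \<in> {Inl i, Inr i}" for i n
  proof
    have "\<And>a b. (a, b) \<in> R \<Longrightarrow> a \<in> {Inl i, Inr i} \<Longrightarrow> b \<in> {Inl i, Inr i}" unfolding R_def by auto
    then show "(R\<^sup>* \<inter> N \<times> N) `` {n} \<subseteq> {Inl i, Inr i}"
      using rtrancl_closed[of R "{Inl i, Inr i}" n] that(2) by blast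
    have "(Inl i, Inr i) \<in> R" "(Inr i, Inl i) \<in> R" using that(1) unfolding R_def by auto
    then show "{Inl i, Inr i} \<subseteq> (R\<^sup>* \<inter> N \<times> N) `` {n}" using that unfolding N_def by auto
  qed
  have "N // (R\<^sup>* \<inter> N \<times> N) = (\<lambda>i. {Inl i, Inr i}) ` A"
    unfolding quotient_def using cls unfolding N_def by blast
  moreover have "inj_on (\<lambda>i. {Inl i, Inr i}) A" by (rule inj_onI) auto
  ultimately show ?thesis unfolding ncomp_def R_def[symmetric] N_def[symmetric] by (simp add: card_image)
qed

lemma card_image_same_kernel:
  assumes "\<And>x y. x \<in> A \<Longrightarrow> y \<in> A \<Longrightarrow> f x = f y \<longleftrightarrow> g x = g y"
  shows "card (f ` A) = card (g ` A)"
proof -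
  define h where "h = g \<circ> inv_into A f"
  have h: "h (f x) = g x" if "x \<in> A" for x
    using assms[OF inv_into_into[of "f x" f A] that] f_inv_into_f[of "f x" f A] that
    unfolding h_def by auto
  have "inj_on h (f ` A)" by (rule inj_onI) (auto simp: h assms)
  moreover have "h ` (f ` A) = g ` A" using h by (auto simp: image_image)
  ultimately show ?thesis using card_image by fastforce
qed

lemma ncomp_classes: "ncomp N R = card ((\<lambda>x. (R\<^sup>* \<inter> N \<times> N) `` {x}) ` N)"
  unfolding ncomp_def quotient_def by (simp add: UNION_singleton_eq_range)

definition edge_rel :: "'i set \<Rightarrow> ('i \<Rightarrow> 'n) \<Rightarrow> ('i \<Rightarrow> 'n) \<Rightarrow> ('n \<times> 'n) set" where
  "edge_rel I t h = {(t e, h e) | e. e \<in> I} \<union> {(h e, t e) | e. e \<in> I}"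

lemma sym_edge_rel: "sym (edge_rel I t h)"
  unfolding edge_rel_def sym_def by blast

lemma edge_rel_edge: "e \<in> I \<Longrightarrow> (t e, h e) \<in> edge_rel I t h"
  unfolding edge_rel_def by blast

lemma edge_rel_cases:
  assumes "(a, b) \<in> edge_rel I t h"
  obtains e where "e \<in> I" "a = t e" "b = h e" | e where "e \<in> I" "a = h e" "b = t e"
  using assms unfolding edge_rel_def by blast

lemma edge_rel_union: "edge_rel (A \<union> B) t h = edge_rel A t h \<union> edge_rel B t h"
  unfolding edge_rel_def by blast

lemma edge_rel_single: "edge_rel {e} t h = {(t e, h e), (h e, t e)}"
  unfolding edge_rel_def by blast

lemma edge_rel_cong: "(\<And>e. e \<in> I \<Longrightarrow> h e = h' e) \<Longrightarrow> edge_rel I t h = edge_rel I t h'"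
  unfolding edge_rel_def by force

lemma edge_rel_same_comp:
  assumes "e \<in> I"
  shows "t e \<in> (edge_rel I t h)\<^sup>* `` {x} \<longleftrightarrow> h e \<in> (edge_rel I t h)\<^sup>* `` {x}"
  using edge_rel_edge[OF assms] sym_edge_rel[THEN symD] by (meson Image_singleton_iff rtrancl_into_rtrancl)

section \<open>The face graph of a family of permutations sharing the cilia\<close>

text \<open>Nodes of the face graph: \<open>Inl (Inl i)\<close> is the copy of cilium \<open>i\<close> where faces start,
  \<open>Inl (Inr i)\<close> the copy where faces end, and \<open>Inr x\<close> a half-edge \<open>x\<close>.\<close>

definition out_node :: "'a set \<Rightarrow> 'a \<Rightarrow> ('a + 'a) + 'a" where
  "out_node C x = (if x \<in> C then Inl (Inl x) else Inr x)"

definition in_node :: "'a set \<Rightarrow> 'a \<Rightarrow> ('a + 'a) + 'a" where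
  "in_node C y = (if y \<in> C then Inl (Inr y) else Inr y)"

text \<open>For every colour \<open>c \<in> K\<close> a permutation \<open>\<Phi> c\<close> (the face permutation of colour \<open>c\<close>) acts on
  the half-edges \<open>Z c\<close> of that colour together with the common set \<open>C\<close> of cilia.  The face graph
  joins \<open>x\<close> to \<open>\<Phi> c x\<close> for all colours, the cilia being split into a source and a target copy.
  Its components are the components of the boundary graph plus the internal faces, and every node
  has the same number of incoming and outgoing arcs of each colour.\<close>

locale face_graph =
  fixes K :: "nat set" and C :: "'a set" and Z :: "nat \<Rightarrow> 'a set" and \<Phi> :: "nat \<Rightarrow> 'a \<Rightarrow> 'a"
  assumes finK: "finite K" and finC: "finite C" and finZ: "\<And>c. c \<in> K \<Longrightarrow> finite (Z c)"
    and ZC: "\<And>c. c \<in> K \<Longrightarrow> Z c \<inter> C = {}"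
    and Zdisj: "\<And>c c'. c \<in> K \<Longrightarrow> c' \<in> K \<Longrightarrow> c \<noteq> c' \<Longrightarrow> Z c \<inter> Z c' = {}"
    and bij: "\<And>c. c \<in> K \<Longrightarrow> bij_betw (\<Phi> c) (Z c \<union> C) (Z c \<union> C)"
begin

definition arcs :: "(nat \<times> 'a) set" where "arcs = Sigma K (\<lambda>c. Z c \<union> C)"
definition arc_tail :: "nat \<times> 'a \<Rightarrow> ('a + 'a) + 'a" where "arc_tail e = out_node C (snd e)"
definition arc_head :: "nat \<times> 'a \<Rightarrow> ('a + 'a) + 'a" where "arc_head e = in_node C (\<Phi> (fst e) (snd e))"

definition face_rel :: "((('a + 'a) + 'a) \<times> (('a + 'a) + 'a)) set" where
  "face_rel = edge_rel arcs arc_tail arc_head"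

definition bdry_nodes :: "('a + 'a) set" where "bdry_nodes = Inl ` C \<union> Inr ` C"

definition face_nodes :: "(('a + 'a) + 'a) set" where
  "face_nodes = Inl ` bdry_nodes \<union> Inr ` (\<Union>c\<in>K. Z c)"

definition bdry_rel :: "(('a + 'a) \<times> ('a + 'a)) set" where
  "bdry_rel = edge_rel (C \<times> K) (\<lambda>(i, c). Inl i) (\<lambda>(i, c). Inr (first_return (\<Phi> c) C i))"

definition int_faces :: "nat \<Rightarrow> 'a set set" where
  "int_faces c = {orbit (\<Phi> c) x | x. x \<in> Z c \<and> orbit (\<Phi> c) x \<inter> C = {}}"

lemma finite_items: "c \<in> K \<Longrightarrow> finite (Z c \<union> C)"
  using finZ finC by blast

lemma step_in: "c \<in> K \<Longrightarrow> y \<in> Z c \<union> C \<Longrightarrow> \<Phi> c y \<in> Z c \<union> C"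
  using bij bij_betwE by blast

lemma iter_in: "c \<in> K \<Longrightarrow> y \<in> Z c \<union> C \<Longrightarrow> (\<Phi> c ^^ n) y \<in> Z c \<union> C"
  using funpow_in_set[of "Z c \<union> C" "\<Phi> c" y n] step_in by blast

lemma orbit_in: "c \<in> K \<Longrightarrow> y \<in> Z c \<union> C \<Longrightarrow> orbit (\<Phi> c) y \<subseteq> Z c \<union> C"
  using orbit_subset[of "Z c \<union> C" "\<Phi> c" y] step_in by blast

lemma colour_unique: "c \<in> K \<Longrightarrow> c' \<in> K \<Longrightarrow> x \<in> Z c \<Longrightarrow> x \<in> Z c' \<Longrightarrow> c = c'"
  using Zdisj by blast

lemma sym_face_rel: "sym face_rel"
  unfolding face_rel_def by (rule sym_edge_rel)

lemma sym_bdry_rel: "sym bdry_rel"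
  unfolding bdry_rel_def by (rule sym_edge_rel)

lemma face_edge: "c \<in> K \<Longrightarrow> x \<in> Z c \<union> C \<Longrightarrow> (out_node C x, in_node C (\<Phi> c x)) \<in> face_rel"
  unfolding face_rel_def using edge_rel_edge[of "(c, x)" arcs arc_tail arc_head]
  by (simp add: arcs_def arc_tail_def arc_head_def)

lemma face_rel_cases:
  assumes "(a, b) \<in> face_rel"
  obtains c x where "c \<in> K" "x \<in> Z c \<union> C" "a = out_node C x" "b = in_node C (\<Phi> c x)"
    | c x where "c \<in> K" "x \<in> Z c \<union> C" "b = out_node C x" "a = in_node C (\<Phi> c x)"
proof -
  obtain e where e: "e \<in> arcs" "(a, b) = (arc_tail e, arc_head e) \<or> (b, a) = (arc_tail e, arc_head e)"
    using assms unfolding face_rel_def by (auto elim: edge_rel_cases)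
  obtain c x where ecx: "e = (c, x)" by (cases e)
  have cx: "c \<in> K" "x \<in> Z c \<union> C" using e(1) unfolding ecx arcs_def by auto
  show ?thesis using e(2) that(1)[OF cx] that(2)[OF cx] unfolding ecx arc_tail_def arc_head_def by auto
qed

lemma cilium_returns: "c \<in> K \<Longrightarrow> i \<in> C \<Longrightarrow> \<exists>k>0. (\<Phi> c ^^ k) i \<in> C"
  using permutation_returns[OF bij finite_items, of c i C] by blast

lemma half_edge_returns:
  assumes "c \<in> K" "x \<in> Z c" "orbit (\<Phi> c) x \<inter> C \<noteq> {}"
  shows "\<exists>k>0. (\<Phi> c ^^ k) x \<in> C"
proof -
  obtain m where m: "(\<Phi> c ^^ m) x \<in> C" using assms(3) unfolding orbit_def by auto
  have "x \<notin> C" using ZC assms(1,2) by blast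
  then have "m \<noteq> 0" using m by (cases m) auto
  then show ?thesis using m by blast
qed

lemma face_path:
  assumes c: "c \<in> K" and x: "x \<in> Z c \<union> C" and ex: "\<exists>k>0. (\<Phi> c ^^ k) x \<in> C"
  shows "0 < j \<Longrightarrow> j \<le> return_time (\<Phi> c) C x
    \<Longrightarrow> (out_node C x, in_node C ((\<Phi> c ^^ j) x)) \<in> face_rel\<^sup>*"
proof (induction j)
  case (Suc j)
  show ?case
  proof (cases "j = 0")
    case True then show ?thesis using face_edge[OF c x] by simp
  next
    case False
    have IH: "(out_node C x, in_node C ((\<Phi> c ^^ j) x)) \<in> face_rel\<^sup>*" using Suc False by simp
    have "(\<Phi> c ^^ j) x \<notin> C" using return_time_props(3)[OF ex, of j] False Suc(3) by simp
    then have "in_node C ((\<Phi> c ^^ j) x) = out_node C ((\<Phi> c ^^ j) x)"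
      by (simp add: in_node_def out_node_def)
    then have "(in_node C ((\<Phi> c ^^ j) x), in_node C ((\<Phi> c ^^ Suc j) x)) \<in> face_rel"
      using face_edge[OF c iter_in[OF c x]] by simp
    with IH show ?thesis by (rule rtrancl_into_rtrancl)
  qed
qed simp

lemma face_path_to_target:
  assumes c: "c \<in> K" and x: "x \<in> Z c \<union> C" and ex: "\<exists>k>0. (\<Phi> c ^^ k) x \<in> C"
  shows "(out_node C x, Inl (Inr (first_return (\<Phi> c) C x))) \<in> face_rel\<^sup>*"
proof -
  have "(out_node C x, in_node C ((\<Phi> c ^^ return_time (\<Phi> c) C x) x)) \<in> face_rel\<^sup>*"
    using face_path[OF assms] return_time_props(1)[OF ex] by simp
  moreover have "first_return (\<Phi> c) C x \<in> C" using first_return_in[OF ex] .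
  ultimately show ?thesis by (simp add: first_return_time in_node_def)
qed

lemma bdry_to_face_path:
  assumes "(u, w) \<in> bdry_rel\<^sup>*"
  shows "(Inl u, Inl w) \<in> face_rel\<^sup>*"
proof (rule rtrancl_map[OF _ assms])
  fix a b assume "(a, b) \<in> bdry_rel"
  then obtain i c where ic: "i \<in> C" "c \<in> K" and
    ab: "(a, b) = (Inl i, Inr (first_return (\<Phi> c) C i)) \<or> (b, a) = (Inl i, Inr (first_return (\<Phi> c) C i))"
    unfolding bdry_rel_def by (auto elim!: edge_rel_cases)
  have "(Inl (Inl i), Inl (Inr (first_return (\<Phi> c) C i))) \<in> face_rel\<^sup>*"
    using face_path_to_target[OF ic(2) _ cilium_returns[OF ic(2,1)]] ic by (simp add: out_node_def)
  then show "(Inl a, Inl b) \<in> face_rel\<^sup>*" using ab rtrancl_sym[OF sym_face_rel] by blast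
qed

text \<open>Conversely, a face-graph path between cilium copies projects to a boundary path: collapse
  every half-edge node onto the target of its face (external faces) or onto its face itself
  (internal faces); every face-graph edge then becomes a boundary edge or a loop.\<close>

definition colour_of :: "'a \<Rightarrow> nat" where "colour_of x = (THE c. c \<in> K \<and> x \<in> Z c)"

lemma colour_of_eq: "c \<in> K \<Longrightarrow> x \<in> Z c \<Longrightarrow> colour_of x = c"
  unfolding colour_of_def using colour_unique by blast

definition collapse :: "('a + 'a) + 'a \<Rightarrow> ('a + 'a) + 'a set" where
  "collapse n = (case n of
       Inl u \<Rightarrow> Inl u
     | Inr x \<Rightarrow> (if orbit (\<Phi> (colour_of x)) x \<inter> C \<noteq> {}
                then Inl (Inr (first_return (\<Phi> (colour_of x)) C x))
                else Inr (orbit (\<Phi> (colour_of x)) x)))"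

definition bdry_rel_lifted :: "((('a + 'a) + 'a set) \<times> (('a + 'a) + 'a set)) set" where
  "bdry_rel_lifted = {(Inl p, Inl q) | p q. (p, q) \<in> bdry_rel}"

lemma sym_bdry_rel_lifted: "sym bdry_rel_lifted"
  using sym_bdry_rel unfolding bdry_rel_lifted_def sym_def by blast

lemma collapse_arc_cilium:
  assumes c: "c \<in> K" and xC: "x \<in> C"
  shows "(collapse (out_node C x), collapse (in_node C (\<Phi> c x))) \<in> bdry_rel_lifted\<^sup>*"
proof -
  let ?y = "\<Phi> c x"
  have "(Inl x, Inr (first_return (\<Phi> c) C x)) \<in> bdry_rel"
    unfolding bdry_rel_def
    using edge_rel_edge[of "(x, c)" "C \<times> K" "\<lambda>(i, c). Inl i" "\<lambda>(i, c). Inr (first_return (\<Phi> c) C i)"]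
      xC c by simp
  then have "(Inl (Inl x), Inl (Inr (first_return (\<Phi> c) C x))) \<in> bdry_rel_lifted"
    unfolding bdry_rel_lifted_def by blast
  then have edge: "(Inl (Inl x), Inl (Inr (first_return (\<Phi> c) C x))) \<in> bdry_rel_lifted\<^sup>*"
    by (rule r_into_rtrancl)
  show ?thesis
  proof (cases "?y \<in> C")
    case True
    then show ?thesis using edge first_return_one[of "\<Phi> c" x C] xC
      by (simp add: out_node_def in_node_def collapse_def)
  next
    case False
    have x: "x \<in> Z c \<union> C" using xC by blast
    then have yZ: "?y \<in> Z c" using step_in[OF c x] False by blast
    have "orbit (\<Phi> c) ?y = orbit (\<Phi> c) x" using orbit_eq[OF bij[OF c] finite_items[OF c] x orbit_step] .
    then have "orbit (\<Phi> c) ?y \<inter> C \<noteq> {}" using orbit_self[of x] xC by blast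
    moreover have "first_return (\<Phi> c) C ?y = first_return (\<Phi> c) C x"
      using first_return_step[OF cilium_returns[OF c xC] False] .
    ultimately show ?thesis using edge xC False colour_of_eq[OF c yZ]
      by (simp add: out_node_def in_node_def collapse_def)
  qed
qed

lemma collapse_arc_half_edge:
  assumes c: "c \<in> K" and xZ: "x \<in> Z c"
  shows "collapse (out_node C x) = collapse (in_node C (\<Phi> c x))"
proof -
  let ?y = "\<Phi> c x"
  have x: "x \<in> Z c \<union> C" and xnC: "x \<notin> C" using xZ ZC[OF c] by blast+
  have y_orb: "?y \<in> orbit (\<Phi> c) x" by (rule orbit_step)
  have same_orbit: "orbit (\<Phi> c) ?y = orbit (\<Phi> c) x"
    using orbit_eq[OF bij[OF c] finite_items[OF c] x y_orb] .
  show ?thesis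
  proof (cases "orbit (\<Phi> c) x \<inter> C = {}")
    case False
    show ?thesis
    proof (cases "?y \<in> C")
      case True
      then show ?thesis using first_return_one[of "\<Phi> c" x C] xnC False colour_of_eq[OF c xZ]
        by (simp add: out_node_def in_node_def collapse_def)
    next
      case yn: False
      then have yZ: "?y \<in> Z c" using step_in[OF c x] by blast
      have "first_return (\<Phi> c) C ?y = first_return (\<Phi> c) C x"
        using first_return_step[OF half_edge_returns[OF c xZ False] yn] .
      then show ?thesis using xnC yn False same_orbit colour_of_eq[OF c xZ] colour_of_eq[OF c yZ]
        by (simp add: out_node_def in_node_def collapse_def)
    qed
  next
    case True
    then have yn: "?y \<notin> C" using y_orb by blast
    then have yZ: "?y \<in> Z c" using step_in[OF c x] by blast
    show ?thesis using xnC yn True same_orbit colour_of_eq[OF c xZ] colour_of_eq[OF c yZ]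
      by (simp add: out_node_def in_node_def collapse_def)
  qed
qed

lemma collapse_arc:
  assumes c: "c \<in> K" and x: "x \<in> Z c \<union> C"
  shows "(collapse (out_node C x), collapse (in_node C (\<Phi> c x))) \<in> bdry_rel_lifted\<^sup>*"
  using collapse_arc_cilium[OF c] collapse_arc_half_edge[OF c] x by (cases "x \<in> C") auto

lemma collapse_edge: "(a, b) \<in> face_rel \<Longrightarrow> (collapse a, collapse b) \<in> bdry_rel_lifted\<^sup>*"
proof (erule face_rel_cases)
  fix c x assume "c \<in> K" "x \<in> Z c \<union> C" "a = out_node C x" "b = in_node C (\<Phi> c x)"
  then show ?thesis using collapse_arc by simp
next
  fix c x assume "c \<in> K" "x \<in> Z c \<union> C" "b = out_node C x" "a = in_node C (\<Phi> c x)"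
  then have "(collapse b, collapse a) \<in> bdry_rel_lifted\<^sup>*" using collapse_arc by simp
  then show ?thesis using rtrancl_sym[OF sym_bdry_rel_lifted] by blast
qed

lemma lifted_path:
  assumes "(Inl p, b) \<in> bdry_rel_lifted\<^sup>*" shows "\<exists>q. b = Inl q \<and> (p, q) \<in> bdry_rel\<^sup>*"
  using assms
proof (induction rule: rtrancl_induct)
  case (step y z)
  then obtain q where q: "y = Inl q" "(p, q) \<in> bdry_rel\<^sup>*" by blast
  from step.hyps(2) obtain q' where "z = Inl q'" "(q, q') \<in> bdry_rel"
    unfolding bdry_rel_lifted_def q(1) by blast
  then show ?case using q(2) by (blast intro: rtrancl_into_rtrancl)
qed simp

lemma face_to_bdry_path:
  assumes "(Inl u, Inl w) \<in> face_rel\<^sup>*" shows "(u, w) \<in> bdry_rel\<^sup>*"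
proof -
  have "(collapse (Inl u), collapse (Inl w)) \<in> bdry_rel_lifted\<^sup>*" using rtrancl_map[OF collapse_edge assms] .
  then have "(Inl u, Inl w) \<in> bdry_rel_lifted\<^sup>*" by (simp add: collapse_def)
  from lifted_path[OF this] show ?thesis by simp
qed

lemma internal_face_closed:
  assumes c: "c \<in> K" and x: "x \<in> Z c" and internal: "orbit (\<Phi> c) x \<inter> C = {}"
    and ab: "(a, b) \<in> face_rel" and a: "a \<in> Inr ` orbit (\<Phi> c) x"
  shows "b \<in> Inr ` orbit (\<Phi> c) x"
proof -
  let ?O = "orbit (\<Phi> c) x"
  have OY: "?O \<subseteq> Z c \<union> C" using orbit_in[OF c] x by blast
  have colour: "c' = c" if "c' \<in> K" "z \<in> Z c'" "z \<in> ?O" for c' z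
    using colour_unique[OF c that(1)] that OY ZC[OF that(1)] by blast
  show ?thesis
  proof (rule face_rel_cases[OF ab])
    fix c' x' assume h: "c' \<in> K" "x' \<in> Z c' \<union> C" "a = out_node C x'" "b = in_node C (\<Phi> c' x')"
    have x'O: "x' \<in> ?O" "x' \<notin> C" using a h(3) by (auto simp: out_node_def split: if_splits)
    then have "c' = c" using colour[OF h(1) _ x'O(1)] h(2) by blast
    then have "\<Phi> c' x' \<in> ?O" using orbit_trans[OF x'O(1) orbit_step] by simp
    then show ?thesis using h(4) internal by (auto simp: in_node_def)
  next
    fix c' x' assume h: "c' \<in> K" "x' \<in> Z c' \<union> C" "b = out_node C x'" "a = in_node C (\<Phi> c' x')"
    have yO: "\<Phi> c' x' \<in> ?O" "\<Phi> c' x' \<notin> C" using a h(4) by (auto simp: in_node_def split: if_splits)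
    have same_col: "c' = c" using colour[OF h(1) _ yO(1)] step_in[OF h(1,2)] yO(2) by blast
    have "x' \<in> Z c \<union> C" using h(2) same_col by simp
    then have "x' \<in> orbit (\<Phi> c) (\<Phi> c x')"
      using orbit_sym[OF bij[OF c] finite_items[OF c] _ orbit_step] by blast
    then have "x' \<in> ?O" using orbit_trans[of "\<Phi> c x'" "\<Phi> c" x x'] yO(1) same_col by blast
    then show ?thesis using h(3) internal by (auto simp: out_node_def)
  qed
qed

lemma internal_class:
  assumes c: "c \<in> K" and x: "x \<in> Z c" and internal: "orbit (\<Phi> c) x \<inter> C = {}"
  shows "face_rel\<^sup>* `` {Inr x} = Inr ` orbit (\<Phi> c) x"
proof
  let ?O = "orbit (\<Phi> c) x"
  have OY: "?O \<subseteq> Z c \<union> C" using orbit_in[OF c] x by blast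
  show "Inr ` ?O \<subseteq> face_rel\<^sup>* `` {Inr x}"
  proof -
    have path: "(Inr x, Inr ((\<Phi> c ^^ n) x)) \<in> face_rel\<^sup>*" for n
    proof (induction n)
      case (Suc n)
      define z where "z = (\<Phi> c ^^ n) x"
      have zO: "z \<in> ?O" "\<Phi> c z \<in> ?O" unfolding z_def orbit_def by (auto intro: exI[of _ "Suc n"])
      then have "z \<notin> C" "\<Phi> c z \<notin> C" using internal by auto
      moreover have "(out_node C z, in_node C (\<Phi> c z)) \<in> face_rel" using face_edge[OF c] zO OY by blast
      ultimately have "(Inr z, Inr (\<Phi> c z)) \<in> face_rel" by (simp add: out_node_def in_node_def)
      with Suc have "(Inr x, Inr (\<Phi> c z)) \<in> face_rel\<^sup>*" unfolding z_def by (rule rtrancl_into_rtrancl)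
      then show ?case by (simp add: z_def)
    qed simp
    show ?thesis
    proof
      fix n :: "('a + 'a) + 'a" assume "n \<in> Inr ` ?O"
      then obtain k where "n = Inr ((\<Phi> c ^^ k) x)" unfolding orbit_def by blast
      then show "n \<in> face_rel\<^sup>* `` {Inr x}" using path by simp
    qed
  qed
  show "face_rel\<^sup>* `` {Inr x} \<subseteq> Inr ` ?O"
  proof
    fix n assume "n \<in> face_rel\<^sup>* `` {Inr x}"
    then have "(Inr x, n) \<in> face_rel\<^sup>*" by simp
    moreover have "Inr x \<in> (Inr ` ?O :: (('a + 'a) + 'a) set)" by (rule imageI[OF orbit_self])
    ultimately show "n \<in> Inr ` ?O"
      using rtrancl_closed[of face_rel "Inr ` ?O" "Inr x" n] internal_face_closed[OF assms] by blast
  qed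
qed

lemma finite_int_faces: "c \<in> K \<Longrightarrow> finite (int_faces c)"
proof -
  assume c: "c \<in> K"
  have "int_faces c \<subseteq> Pow (Z c \<union> C)" unfolding int_faces_def using orbit_in[OF c] by blast
  then show ?thesis using finite_items[OF c] finite_Pow_iff finite_subset by metis
qed

lemma out_node_in: "c \<in> K \<Longrightarrow> x \<in> Z c \<union> C \<Longrightarrow> out_node C x \<in> face_nodes"
  unfolding out_node_def face_nodes_def bdry_nodes_def by auto

lemma in_node_in: "c \<in> K \<Longrightarrow> x \<in> Z c \<union> C \<Longrightarrow> in_node C x \<in> face_nodes"
  unfolding in_node_def face_nodes_def bdry_nodes_def by auto

lemma face_nodes_closed: "(a, b) \<in> face_rel \<Longrightarrow> b \<in> face_nodes"
  by (erule face_rel_cases) (use in_node_in[OF _ step_in] out_node_in in blast)+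

definition face_conn :: "((('a + 'a) + 'a) \<times> (('a + 'a) + 'a)) set" where
  "face_conn = face_rel\<^sup>* \<inter> face_nodes \<times> face_nodes"

lemma equiv_face_conn: "equiv face_nodes face_conn"
  unfolding face_conn_def by (rule equiv_connected[OF sym_face_rel])

lemma face_conn_class: "a \<in> face_nodes \<Longrightarrow> face_conn `` {a} = face_rel\<^sup>* `` {a}"
  unfolding face_conn_def using rtrancl_closed[of face_rel face_nodes a] face_nodes_closed by blast

definition bdry_classes :: "(('a + 'a) + 'a) set set" where
  "bdry_classes = (\<lambda>u. face_conn `` {Inl u}) ` bdry_nodes"

definition int_classes :: "(('a + 'a) + 'a) set set" where
  "int_classes = (\<Union>c\<in>K. (`) Inr ` int_faces c)"

lemma cilium_copy_in: "u \<in> bdry_nodes \<Longrightarrow> Inl u \<in> face_nodes"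
  unfolding face_nodes_def by simp

text \<open>Every class is a boundary class or an internal face: a half-edge on an external face is
  connected to the target copy of the cilium ending that face.\<close>

lemma face_classes_sub: "face_nodes // face_conn \<subseteq> bdry_classes \<union> int_classes"
proof
  fix Q assume "Q \<in> face_nodes // face_conn"
  then obtain n where n: "n \<in> face_nodes" "Q = face_conn `` {n}" by (auto elim: quotientE)
  show "Q \<in> bdry_classes \<union> int_classes"
  proof (cases n)
    case (Inl u)
    then have "u \<in> bdry_nodes" using n(1) unfolding face_nodes_def by auto
    then show ?thesis using n Inl unfolding bdry_classes_def by auto
  next
    case (Inr x)
    then obtain c where c: "c \<in> K" "x \<in> Z c" using n(1) unfolding face_nodes_def by auto
    show ?thesis
    proof (cases "orbit (\<Phi> c) x \<inter> C = {}")
      case True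
      then have "Q = Inr ` orbit (\<Phi> c) x"
        using n Inr face_conn_class internal_class[OF c] by simp
      moreover have "orbit (\<Phi> c) x \<in> int_faces c" unfolding int_faces_def using c True by blast
      ultimately show ?thesis unfolding int_classes_def using c(1) by blast
    next
      case False
      let ?t = "first_return (\<Phi> c) C x"
      have ex: "\<exists>k>0. (\<Phi> c ^^ k) x \<in> C" using half_edge_returns[OF c False] .
      have "x \<notin> C" using ZC c by blast
      then have "(Inr x, Inl (Inr ?t)) \<in> face_rel\<^sup>*"
        using face_path_to_target[OF c(1) _ ex] c by (simp add: out_node_def)
      moreover have t: "Inr ?t \<in> bdry_nodes"
        using first_return_in[OF ex] unfolding bdry_nodes_def by simp
      ultimately have "(Inr x, Inl (Inr ?t)) \<in> face_conn"
        using n(1) Inr cilium_copy_in unfolding face_conn_def by simp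
      then have "Q = face_conn `` {Inl (Inr ?t)}" using n Inr equiv_class_eq[OF equiv_face_conn] by simp
      then show ?thesis using t unfolding bdry_classes_def by blast
    qed
  qed
qed

lemma classes_in_quotient: "bdry_classes \<union> int_classes \<subseteq> face_nodes // face_conn"
proof
  fix Q assume "Q \<in> bdry_classes \<union> int_classes"
  then show "Q \<in> face_nodes // face_conn"
  proof
    assume "Q \<in> bdry_classes"
    then show ?thesis unfolding bdry_classes_def using cilium_copy_in by (auto intro: quotientI)
  next
    assume "Q \<in> int_classes"
    then obtain c x where c: "c \<in> K" "x \<in> Z c" "orbit (\<Phi> c) x \<inter> C = {}"
      and Q: "Q = Inr ` orbit (\<Phi> c) x"
      unfolding int_classes_def int_faces_def by blast
    have x: "Inr x \<in> face_nodes" unfolding face_nodes_def using c by blast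
    have "Q = face_conn `` {Inr x}" using Q internal_class[OF c] face_conn_class[OF x] by simp
    then show ?thesis using x by (auto intro: quotientI)
  qed
qed

lemma face_quotient: "face_nodes // face_conn = bdry_classes \<union> int_classes"
  using face_classes_sub classes_in_quotient by (rule equalityI)

lemma bdry_int_disjoint: "bdry_classes \<inter> int_classes = {}"
proof -
  have "Inl u \<in> face_conn `` {Inl u}" if "u \<in> bdry_nodes" for u
    using that unfolding face_conn_def face_nodes_def by blast
  moreover have "Q \<subseteq> range Inr" if "Q \<in> int_classes" for Q
    using that unfolding int_classes_def by blast
  ultimately show ?thesis unfolding bdry_classes_def by blast
qed

lemma card_bdry_classes: "card bdry_classes = ncomp bdry_nodes bdry_rel"
proof -
  let ?b = "bdry_rel\<^sup>* \<inter> bdry_nodes \<times> bdry_nodes"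
  have eqb: "equiv bdry_nodes ?b" by (rule equiv_connected[OF sym_bdry_rel])
  have "face_conn `` {Inl u} = face_conn `` {Inl w} \<longleftrightarrow> ?b `` {u} = ?b `` {w}"
    if "u \<in> bdry_nodes" "w \<in> bdry_nodes" for u w
  proof -
    have "Inl u \<in> face_nodes" "Inl w \<in> face_nodes" using that unfolding face_nodes_def by auto
    then have "face_conn `` {Inl u} = face_conn `` {Inl w} \<longleftrightarrow> (Inl u, Inl w) \<in> face_rel\<^sup>*"
      using equiv_class_eq_iff[OF equiv_face_conn] unfolding face_conn_def by blast
    also have "\<dots> \<longleftrightarrow> (u, w) \<in> bdry_rel\<^sup>*" using bdry_to_face_path face_to_bdry_path by blast
    also have "\<dots> \<longleftrightarrow> ?b `` {u} = ?b `` {w}" using equiv_class_eq_iff[OF eqb] that by blast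
    finally show ?thesis .
  qed
  then show ?thesis unfolding bdry_classes_def ncomp_classes by (rule card_image_same_kernel)
qed

lemma int_face_sub: "Q \<in> int_faces c \<Longrightarrow> c \<in> K \<Longrightarrow> Q \<subseteq> Z c"
  unfolding int_faces_def using orbit_in by blast

lemma card_int_classes: "card int_classes = (\<Sum>c\<in>K. card (int_faces c))"
proof -
  have inj: "inj_on ((`) (Inr :: 'a \<Rightarrow> ('a + 'a) + 'a)) X" for X
    by (rule inj_onI) (simp add: inj_image_eq_iff)
  have fin: "\<forall>c\<in>K. finite ((`) Inr ` int_faces c :: (('a + 'a) + 'a) set set)"
    using finite_int_faces by blast
  have disj: "((`) Inr ` int_faces c :: (('a + 'a) + 'a) set set) \<inter> (`) Inr ` int_faces c' = {}"
    if "c \<in> K" "c' \<in> K" "c \<noteq> c'" for c c'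
  proof -
    have "Q \<inter> Q' = {}" if "Q \<in> int_faces c" "Q' \<in> int_faces c'" for Q Q'
      using int_face_sub[OF that(1)] int_face_sub[OF that(2)] Zdisj[OF \<open>c \<in> K\<close> \<open>c' \<in> K\<close> \<open>c \<noteq> c'\<close>]
        \<open>c \<in> K\<close> \<open>c' \<in> K\<close> by blast
    moreover have "Q \<noteq> {}" if "Q \<in> int_faces c" for Q
      using that orbit_self unfolding int_faces_def by fastforce
    ultimately show ?thesis by (auto simp: inj_image_eq_iff) (metis Int_absorb)
  qed
  have "card int_classes = (\<Sum>c\<in>K. card ((`) Inr ` int_faces c :: (('a + 'a) + 'a) set set))"
    unfolding int_classes_def by (rule card_UN_disjoint[OF finK fin]) (use disj in blast)
  also have "\<dots> = (\<Sum>c\<in>K. card (int_faces c))" using card_image[OF inj] by simp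
  finally show ?thesis .
qed

theorem face_graph_components:
  "ncomp face_nodes face_rel = ncomp bdry_nodes bdry_rel + (\<Sum>c\<in>K. card (int_faces c))"
proof -
  have "finite bdry_classes" unfolding bdry_classes_def bdry_nodes_def using finC by simp
  moreover have "finite int_classes" unfolding int_classes_def using finK finite_int_faces by blast
  ultimately have "card (face_nodes // face_conn) = card bdry_classes + card int_classes"
    unfolding face_quotient using bdry_int_disjoint by (simp add: card_Un_disjoint)
  then show ?thesis unfolding ncomp_def face_conn_def[symmetric] card_bdry_classes card_int_classes .
qed

text \<open>Every colour contributes one arc leaving and one arc entering each half-edge
  node, one arc leaving each source copy and one entering each target copy of a cilium.\<close>

lemma card_tails:
  "card {e \<in> arcs. arc_tail e \<in> T}
     = card K * card {i \<in> C. Inl (Inl i) \<in> T} + (\<Sum>c\<in>K. card {x \<in> Z c. Inr x \<in> T})"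
proof -
  have "{e \<in> arcs. arc_tail e \<in> T} = Sigma K (\<lambda>c. {x \<in> Z c \<union> C. out_node C x \<in> T})"
    unfolding arcs_def arc_tail_def by auto
  then have "card {e \<in> arcs. arc_tail e \<in> T} = (\<Sum>c\<in>K. card {x \<in> Z c \<union> C. out_node C x \<in> T})"
    using card_SigmaI finK finite_items by simp
  also have "\<dots> = (\<Sum>c\<in>K. card {i \<in> C. Inl (Inl i) \<in> T} + card {x \<in> Z c. Inr x \<in> T})"
  proof (rule sum.cong[OF refl])
    fix c assume c: "c \<in> K"
    have "{x \<in> Z c \<union> C. out_node C x \<in> T} = {i \<in> C. Inl (Inl i) \<in> T} \<union> {x \<in> Z c. Inr x \<in> T}"
      using ZC[OF c] by (auto simp: out_node_def)
    moreover have "{i \<in> C. Inl (Inl i) \<in> T} \<inter> {x \<in> Z c. Inr x \<in> T} = {}" using ZC[OF c] by auto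
    ultimately show "card {x \<in> Z c \<union> C. out_node C x \<in> T}
        = card {i \<in> C. Inl (Inl i) \<in> T} + card {x \<in> Z c. Inr x \<in> T}"
      using finC finZ[OF c] by (simp add: card_Un_disjoint)
  qed
  finally show ?thesis by (simp add: sum.distrib)
qed

lemma card_heads:
  "card {e \<in> arcs. arc_head e \<in> T}
     = card K * card {i \<in> C. Inl (Inr i) \<in> T} + (\<Sum>c\<in>K. card {x \<in> Z c. Inr x \<in> T})"
proof -
  have "{e \<in> arcs. arc_head e \<in> T} = Sigma K (\<lambda>c. {x \<in> Z c \<union> C. in_node C (\<Phi> c x) \<in> T})"
    unfolding arcs_def arc_head_def by auto
  then have "card {e \<in> arcs. arc_head e \<in> T} = (\<Sum>c\<in>K. card {x \<in> Z c \<union> C. in_node C (\<Phi> c x) \<in> T})"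
    using card_SigmaI finK finite_items by simp
  also have "\<dots> = (\<Sum>c\<in>K. card {i \<in> C. Inl (Inr i) \<in> T} + card {x \<in> Z c. Inr x \<in> T})"
  proof (rule sum.cong[OF refl])
    fix c assume c: "c \<in> K"
    let ?P = "{x \<in> Z c \<union> C. in_node C (\<Phi> c x) \<in> T}" and ?Q = "{y \<in> Z c \<union> C. in_node C y \<in> T}"
    text \<open>Since \<open>\<Phi> c\<close> permutes \<open>Z c \<union> C\<close>, counting heads amounts to counting nodes.\<close>
    have inj: "inj_on (\<Phi> c) ?P" using bij[OF c] unfolding bij_betw_def by (auto intro: inj_on_subset)
    have "\<Phi> c ` ?P = ?Q"
    proof
      show "\<Phi> c ` ?P \<subseteq> ?Q" using step_in[OF c] by auto
      show "?Q \<subseteq> \<Phi> c ` ?P"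
      proof
        fix y assume y: "y \<in> ?Q"
        then obtain x where "x \<in> Z c \<union> C" "\<Phi> c x = y"
          using bij[OF c] unfolding bij_betw_def by (metis (no_types, lifting) imageE mem_Collect_eq)
        then show "y \<in> \<Phi> c ` ?P" using y by auto
      qed
    qed
    then have "card ?P = card ?Q" using card_image[OF inj] by simp
    moreover have "?Q = {i \<in> C. Inl (Inr i) \<in> T} \<union> {x \<in> Z c. Inr x \<in> T}"
      using ZC[OF c] by (auto simp: in_node_def)
    moreover have "{i \<in> C. Inl (Inr i) \<in> T} \<inter> {x \<in> Z c. Inr x \<in> T} = {}" using ZC[OF c] by auto
    ultimately show "card ?P = card {i \<in> C. Inl (Inr i) \<in> T} + card {x \<in> Z c. Inr x \<in> T}"
      using finC finZ[OF c] by (simp add: card_Un_disjoint)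
  qed
  also have "\<dots> = card K * card {i \<in> C. Inl (Inr i) \<in> T} + (\<Sum>c\<in>K. card {x \<in> Z c. Inr x \<in> T})"
    by (simp add: sum.distrib)
  finally show ?thesis .
qed

lemma arcs_balance:
  "int (card {e \<in> arcs. arc_tail e \<in> T}) - int (card {e \<in> arcs. arc_head e \<in> T})
     = int (card K) * (int (card {i \<in> C. Inl (Inl i) \<in> T}) - int (card {i \<in> C. Inl (Inr i) \<in> T}))"
  unfolding card_tails card_heads by (simp add: algebra_simps)

text \<open>Consequently, when at least two colours are present, no arc of the face graph is a bridge,
  even after deleting further arcs \<open>J\<close> that do not touch the component of its tail.\<close>

lemma arc_not_bridge:
  assumes K2: "2 \<le> card K" and J: "J \<subseteq> arcs" "e \<in> J"
    and R: "R = edge_rel (arcs - J) arc_tail arc_head"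
    and away: "\<And>e'. e' \<in> J - {e} \<Longrightarrow> (arc_tail e, arc_tail e') \<notin> R\<^sup>* \<and> (arc_tail e, arc_head e') \<notin> R\<^sup>*"
  shows "(arc_tail e, arc_head e) \<in> R\<^sup>*"
proof (rule ccontr)
  assume no_path: "(arc_tail e, arc_head e) \<notin> R\<^sup>*"
  define T where "T = R\<^sup>* `` {arc_tail e}"
  have outside: "arc_tail e' \<in> T \<longleftrightarrow> arc_head e' \<in> T" if "e' \<in> arcs - J" for e'
    unfolding T_def R using edge_rel_same_comp[OF that] by metis
  have e_ends: "arc_tail e \<in> T" "arc_head e \<notin> T" using no_path unfolding T_def by auto
  have others: "arc_tail e' \<notin> T" "arc_head e' \<notin> T" if "e' \<in> J - {e}" for e'
    using away[OF that] unfolding T_def by auto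
  have tails: "{e' \<in> arcs. arc_tail e' \<in> T} = insert e {e' \<in> arcs - J. arc_tail e' \<in> T}"
    using J e_ends others by blast
  have heads: "{e' \<in> arcs. arc_head e' \<in> T} = {e' \<in> arcs - J. arc_tail e' \<in> T}"
    using J e_ends others outside by blast
  have "finite arcs" unfolding arcs_def using finK finite_items by blast
  then have "int (card {e' \<in> arcs. arc_tail e' \<in> T}) - int (card {e' \<in> arcs. arc_head e' \<in> T}) = 1"
    unfolding tails heads using J(2) by (simp add: card_insert_if)
  then have "1 = int (card K) * (int (card {i \<in> C. Inl (Inl i) \<in> T}) - int (card {i \<in> C. Inl (Inr i) \<in> T}))"
    using arcs_balance[of T] by simp
  then have "int (card K) dvd 1" by (rule dvdI)
  then show False using K2 by simp
qed

end

section \<open>Ciliated maps with partially glued edges\<close>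

text \<open>A ciliated map with at least two colours (two suffice for the flow-balance argument),
  with short names for its components.\<close>

locale cmap_ctx =
  fixes D :: nat and M :: "('a, 'v) cmap"
  assumes cm: "ciliated_map D M" and D2: "2 \<le> D"
begin

abbreviation "H \<equiv> cm_half M"
abbreviation "C \<equiv> cm_cilia M"
abbreviation "X \<equiv> cm_items M"
abbreviation "vx \<equiv> cm_vx M"
abbreviation "rot \<equiv> cm_rot M"
abbreviation "iv \<equiv> cm_inv M"
abbreviation "col \<equiv> cm_col M"
abbreviation "Vs \<equiv> cm_verts M"

lemma finH: "finite H" and finC: "finite C" and finV: "finite Vs" and HC: "H \<inter> C = {}"
  and vx_in: "x \<in> X \<Longrightarrow> vx x \<in> Vs"
  and rot_bij: "bij_betw rot X X"
  and same_vertex: "x \<in> X \<Longrightarrow> y \<in> X \<Longrightarrow> vx x = vx y \<longleftrightarrow> (\<exists>n. (rot ^^ n) x = y)"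
  and cilium_unique: "x \<in> C \<Longrightarrow> y \<in> C \<Longrightarrow> vx x = vx y \<Longrightarrow> x = y"
  and inv_in: "h \<in> H \<Longrightarrow> iv h \<in> H" and inv_neq: "h \<in> H \<Longrightarrow> iv h \<noteq> h"
  and inv_inv: "h \<in> H \<Longrightarrow> iv (iv h) = h"
  and col_in: "h \<in> H \<Longrightarrow> col h \<in> {1..D}" and col_inv: "h \<in> H \<Longrightarrow> col (iv h) = col h"
  using cm unfolding ciliated_map_def by blast+

lemma finX: "finite X" unfolding cm_items_def using finH finC by simp

definition col_items :: "nat \<Rightarrow> 'a set" where "col_items c = half_col M c \<union> C"

lemma col_items_sub: "col_items c \<subseteq> X" unfolding col_items_def half_col_def cm_items_def by auto

lemma rot_col_first_return: "rot_col M c = first_return rot (col_items c)"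
  unfolding rot_col_def first_return_def col_items_def by (simp add: fun_eq_iff)

lemma rot_col_bij: "bij_betw (rot_col M c) (col_items c) (col_items c)"
  unfolding rot_col_first_return using first_return_bij[OF rot_bij finX col_items_sub] .

lemma orbit_rot: "x \<in> X \<Longrightarrow> orbit rot x = {y \<in> X. vx y = vx x}"
proof -
  assume x: "x \<in> X"
  have "\<And>y. y \<in> X \<Longrightarrow> rot y \<in> X" using rot_bij bij_betwE by blast
  then have sub: "orbit rot x \<subseteq> X" using x by (rule orbit_subset)
  show ?thesis
  proof
    show "orbit rot x \<subseteq> {y \<in> X. vx y = vx x}"
    proof
      fix y assume y: "y \<in> orbit rot x"
      then obtain n where "(rot ^^ n) x = y" unfolding orbit_def by blast
      moreover have "y \<in> X" using sub y by blast
      ultimately show "y \<in> {y \<in> X. vx y = vx x}" using same_vertex[OF x, of y] by auto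
    qed
    show "{y \<in> X. vx y = vx x} \<subseteq> orbit rot x"
    proof
      fix y assume "y \<in> {y \<in> X. vx y = vx x}"
      then obtain n where "(rot ^^ n) x = y" using same_vertex[OF x, of y] by auto
      then show "y \<in> orbit rot x" unfolding orbit_def by blast
    qed
  qed
qed

lemma orbit_rot_col:
  assumes x: "x \<in> col_items c"
  shows "orbit (rot_col M c) x = {y \<in> col_items c. vx y = vx x}"
proof -
  have "orbit (rot_col M c) x = orbit rot x \<inter> col_items c"
    unfolding rot_col_first_return by (rule orbit_first_return[OF rot_bij finX col_items_sub x])
  moreover have "orbit rot x = {y \<in> X. vx y = vx x}" using orbit_rot col_items_sub x by blast
  ultimately show ?thesis using col_items_sub by blast
qed

lemma vx_rot_col: "x \<in> col_items c \<Longrightarrow> vx (rot_col M c x) = vx x"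
  using orbit_rot_col[of x c] orbit_step[of "rot_col M c" x] by blast

text \<open>A cilium is alone on its vertex among the cilia, so it is its own first return to \<open>C\<close>.\<close>

lemma cilium_first_return: "i \<in> C \<Longrightarrow> first_return (rot_col M c) C i = i"
proof -
  assume i: "i \<in> C"
  have CY: "C \<subseteq> col_items c" and iY: "i \<in> col_items c" using i unfolding col_items_def by blast+
  have fin: "finite (col_items c)" using finX col_items_sub finite_subset by blast
  have ex: "\<exists>k>0. (rot_col M c ^^ k) i \<in> C" using permutation_returns[OF rot_col_bij fin i CY] .
  have "first_return (rot_col M c) C i \<in> orbit (rot_col M c) i" by (rule first_return_in_orbit)
  then have "vx (first_return (rot_col M c) C i) = vx i" using orbit_rot_col[OF iY] by blast
  then show ?thesis using cilium_unique[OF first_return_in[OF ex] i] by simp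
qed

lemma half_col_sub: "half_col M c \<subseteq> H" unfolding half_col_def by auto

lemma col_half_col: "x \<in> half_col M c \<Longrightarrow> col x = c" unfolding half_col_def by auto

text \<open>For a set \<open>S\<close> of half-edges closed under the involution, keep the edges
  inside \<open>S\<close> and cut every other edge into two dangling half-edges.  The face step of colour \<open>c\<close>
  of the resulting map crosses an edge only if it is glued, and then turns to the next item of
  \<open>M\<^sub>c\<close>.\<close>

definition inv_closed :: "'a set \<Rightarrow> bool" where
  "inv_closed S \<longleftrightarrow> S \<subseteq> H \<and> (\<forall>h \<in> S. iv h \<in> S)"

definition cross :: "'a set \<Rightarrow> 'a \<Rightarrow> 'a" where "cross S x = (if x \<in> S then iv x else x)"

definition pstep :: "'a set \<Rightarrow> nat \<Rightarrow> 'a \<Rightarrow> 'a" where "pstep S c x = rot_col M c (cross S x)"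

lemma cross_in: "inv_closed S \<Longrightarrow> x \<in> col_items c \<Longrightarrow> cross S x \<in> col_items c"
  unfolding inv_closed_def cross_def col_items_def half_col_def using inv_in col_inv HC by auto

lemma cross_cross: "inv_closed S \<Longrightarrow> x \<in> col_items c \<Longrightarrow> cross S (cross S x) = x"
  unfolding inv_closed_def cross_def using inv_inv by auto

lemma cross_bij: "inv_closed S \<Longrightarrow> bij_betw (cross S) (col_items c) (col_items c)"
  by (rule bij_betw_byWitness[where f' = "cross S"]) (auto simp: cross_cross cross_in)

lemma pstep_bij: "inv_closed S \<Longrightarrow> bij_betw (pstep S c) (col_items c) (col_items c)"
proof -
  assume "inv_closed S"
  then have "bij_betw (rot_col M c \<circ> cross S) (col_items c) (col_items c)"
    using bij_betw_trans[OF cross_bij rot_col_bij] by blast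
  moreover have "rot_col M c \<circ> cross S = pstep S c" by (simp add: pstep_def fun_eq_iff)
  ultimately show ?thesis by simp
qed

lemma pstep_in: "inv_closed S \<Longrightarrow> y \<in> col_items c \<Longrightarrow> pstep S c y \<in> col_items c"
  using pstep_bij bij_betwE by blast

lemma pstep_empty: "pstep {} c = rot_col M c"
  unfolding pstep_def cross_def by (simp add: fun_eq_iff)

lemma face_step_pstep: "y \<in> col_items c \<Longrightarrow> face_step M c y = pstep H c y"
  unfolding face_step_def pstep_def cross_def col_items_def half_col_def using HC by auto

lemma face_graph_pstep: "inv_closed S \<Longrightarrow> face_graph {1..D} C (half_col M) (pstep S)"
proof unfold_locales
  fix c assume "inv_closed S"
  show "finite (half_col M c)" using finH half_col_sub finite_subset by blast
  show "half_col M c \<inter> C = {}" using HC half_col_sub by blast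
  show "bij_betw (pstep S c) (half_col M c \<union> C) (half_col M c \<union> C)"
    using pstep_bij[OF \<open>inv_closed S\<close>] by (simp add: col_items_def)
next
  fix c c' :: nat assume "c \<noteq> c'"
  then show "half_col M c \<inter> half_col M c' = {}" unfolding half_col_def by auto
qed (auto simp: finC)

definition glue_rel :: "'a set \<Rightarrow> ('v \<times> 'v) set" where
  "glue_rel S = {(vx h, vx (iv h)) | h. h \<in> S}"

definition glue_comps :: "'a set \<Rightarrow> nat" where "glue_comps S = ncomp Vs (glue_rel S)"

definition pface_rel :: "'a set \<Rightarrow> ((('a + 'a) + 'a) \<times> (('a + 'a) + 'a)) set" where
  "pface_rel S = face_graph.face_rel {1..D} C (half_col M) (pstep S)"

definition pface_nodes :: "(('a + 'a) + 'a) set" where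
  "pface_nodes = face_graph.face_nodes {1..D} C (half_col M)"

definition n_isolated :: int where "n_isolated = (\<Sum>c=1..D. int (card (isolated_col M c)))"

text \<open>The potential whose non-negativity for \<open>S = H\<close> is the theorem.\<close>

definition defect :: "'a set \<Rightarrow> int" where
  "defect S = int (card S div 2) + (int D - 2) * int (nV M) + 2 * int (glue_comps S)
           - (int D - 1) * int (nP M) - int (ncomp pface_nodes (pface_rel S)) - n_isolated"

lemma inv_closed_H: "inv_closed H" unfolding inv_closed_def using inv_in by blast

lemma glue_comps_H: "connected_cmap M \<Longrightarrow> glue_comps H = 1"
  unfolding glue_comps_def glue_rel_def connected_cmap_def cmap_edge_rel_def
  by (rule ncomp_connected) auto

lemma full_gluing_components:
  "int (ncomp pface_nodes (pface_rel H)) + n_isolated = int (bdry_components D M) + int (F_int D M)"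
proof -
  interpret I: face_graph "{1..D}" C "half_col M" "pstep H" by (rule face_graph_pstep[OF inv_closed_H])
  have iter: "(pstep H c ^^ n) y = (face_step M c ^^ n) y" if "y \<in> col_items c" for c y n
    by (rule funpow_cong_on[of "col_items c"]) (use that face_step_pstep pstep_in[OF inv_closed_H] in auto)
  have targets: "first_return (pstep H c) C i = face_target M c i" if "i \<in> C" for c i
    using iter[of i c] that unfolding face_target_def first_return_def col_items_def by simp
  have "I.bdry_rel = bdry_adj D M"
    unfolding I.bdry_rel_def bdry_adj_def edge_rel_def using targets by fastforce
  moreover have "I.bdry_nodes = bdry_verts M" unfolding I.bdry_nodes_def bdry_verts_def by simp
  moreover have "I.int_faces c = {face_orbit M c h | h. h \<in> half_col M c \<and> face_orbit M c h \<inter> C = {}}" for c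
  proof -
    have "orbit (pstep H c) x = face_orbit M c x" if "x \<in> half_col M c" for x
      using iter[of x c] that unfolding orbit_def face_orbit_def col_items_def by simp
    then show ?thesis unfolding I.int_faces_def by (auto; metis)
  qed
  ultimately have "ncomp pface_nodes (pface_rel H) = bdry_components D M + (\<Sum>c\<in>{1..D}.
      card {face_orbit M c h | h. h \<in> half_col M c \<and> face_orbit M c h \<inter> C = {}})"
    using I.face_graph_components unfolding pface_nodes_def pface_rel_def bdry_components_def ncomp_def
    by simp
  then show ?thesis
    unfolding n_isolated_def F_int_def F_int_col_def by (simp add: sum.distrib)
qed

text \<open>No edge glued: every face of colour \<open>c\<close> runs around a single vertex of \<open>M\<^sub>c\<close>.  Its internal
  faces are the vertices carrying a half-edge of colour \<open>c\<close> but no cilium, so together with the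
  isolated vertices of \<open>M\<^sub>c\<close> and the cilia they account for all vertices.\<close>

lemma unglued_vertex_count:
  "card (face_graph.int_faces C (half_col M) (pstep {}) c) + card (isolated_col M c) + card C = card Vs"
proof -
  interpret I: face_graph "{1..D}" C "half_col M" "pstep {}"
    by (rule face_graph_pstep) (simp add: inv_closed_def)
  define W where "W = {v \<in> Vs. (\<exists>h \<in> half_col M c. vx h = v) \<and> \<not> (\<exists>i \<in> C. vx i = v)}"
  define items_at where "items_at v = {y \<in> col_items c. vx y = v}" for v
  have int_faces: "I.int_faces c = items_at ` W"
  proof
    show "I.int_faces c \<subseteq> items_at ` W"
    proof
      fix Q assume "Q \<in> I.int_faces c"
      then obtain x where x: "x \<in> half_col M c" "Q = orbit (rot_col M c) x" "Q \<inter> C = {}"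
        unfolding I.int_faces_def pstep_empty by blast
      have xY: "x \<in> col_items c" using x(1) unfolding col_items_def by blast
      have Q: "Q = items_at (vx x)" using x(2) orbit_rot_col[OF xY] unfolding items_at_def by simp
      have "\<not> (\<exists>i \<in> C. vx i = vx x)" using x(3) Q unfolding items_at_def col_items_def by auto
      moreover have "vx x \<in> Vs" using vx_in xY col_items_sub by blast
      ultimately have "vx x \<in> W" unfolding W_def using x(1) by blast
      then show "Q \<in> items_at ` W" using Q by blast
    qed
    show "items_at ` W \<subseteq> I.int_faces c"
    proof
      fix Q assume "Q \<in> items_at ` W"
      then obtain v h where v: "v \<in> W" "Q = items_at v" "h \<in> half_col M c" "vx h = v"
        unfolding W_def by blast
      have hY: "h \<in> col_items c" using v(3) unfolding col_items_def by blast
      have Q: "Q = orbit (rot_col M c) h" using orbit_rot_col[OF hY] v unfolding items_at_def by simp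
      have "Q \<inter> C = {}" using v(1,2) unfolding W_def items_at_def by auto
      then show "Q \<in> I.int_faces c" unfolding I.int_faces_def pstep_empty using Q v(3) by blast
    qed
  qed
  have "inj_on items_at W"
  proof (rule inj_onI)
    fix u w assume uw: "u \<in> W" "w \<in> W" "items_at u = items_at w"
    obtain h where h: "h \<in> half_col M c" "vx h = u" using uw(1) unfolding W_def by blast
    then have "h \<in> items_at w" using uw(3) unfolding items_at_def col_items_def by blast
    then show "u = w" using h unfolding items_at_def by simp
  qed
  then have card_W: "card (I.int_faces c) = card W" using int_faces card_image by simp
  have card_C: "card (vx ` C) = card C" using card_image cilium_unique by (metis inj_onI)
  have part: "Vs = W \<union> isolated_col M c \<union> vx ` C"
    unfolding W_def isolated_col_def using vx_in unfolding cm_items_def by (auto simp: image_iff; metis)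
  have "W \<inter> isolated_col M c = {}" "(W \<union> isolated_col M c) \<inter> vx ` C = {}"
    unfolding W_def isolated_col_def by auto
  moreover have "finite W" "finite (isolated_col M c)" "finite (vx ` C)"
    unfolding W_def isolated_col_def using finV finC by auto
  ultimately have "card Vs = card W + card (isolated_col M c) + card (vx ` C)"
    using part by (simp add: card_Un_disjoint)
  then show ?thesis using card_W card_C by simp
qed

lemma defect_empty: "defect {} = 0"
proof -
  interpret I: face_graph "{1..D}" C "half_col M" "pstep {}"
    by (rule face_graph_pstep) (simp add: inv_closed_def)
  have glue: "glue_comps {} = card Vs" unfolding glue_comps_def glue_rel_def using ncomp_empty finV by simp
  text \<open>Every external face returns to its own cilium: the boundary graph is a perfect matching.\<close>
  have "I.bdry_rel = {(Inl i, Inr i) | i. i \<in> C} \<union> {(Inr i, Inl i) | i. i \<in> C}"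
    unfolding I.bdry_rel_def edge_rel_def pstep_empty using cilium_first_return D2 by force
  moreover have "I.bdry_nodes = Inl ` C \<union> Inr ` C" unfolding I.bdry_nodes_def by simp
  ultimately have "ncomp pface_nodes (pface_rel {}) = card C + (\<Sum>c\<in>{1..D}. card (I.int_faces c))"
    using I.face_graph_components ncomp_matching[OF finC] unfolding pface_nodes_def pface_rel_def by simp
  then have "int (ncomp pface_nodes (pface_rel {})) + n_isolated
      = int (card C) + (\<Sum>c=1..D. int (card (I.int_faces c)) + int (card (isolated_col M c)))"
    unfolding n_isolated_def by (simp add: sum.distrib)
  also have "\<dots> = int (card C) + (\<Sum>c=1..D. int (card Vs) - int (card C))"
    using unglued_vertex_count by (intro arg_cong2[where f = "(+)"] sum.cong) (auto simp: algebra_simps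
        of_nat_add[symmetric] simp del: of_nat_add)
  finally have "int (ncomp pface_nodes (pface_rel {})) + n_isolated
      = int (card C) + int D * (int (card Vs) - int (card C))" by simp
  then show ?thesis unfolding defect_def nV_def nP_def glue by (simp add: algebra_simps)
qed

definition node_vertex :: "('a + 'a) + 'a \<Rightarrow> 'v" where
  "node_vertex n = (case n of Inl (Inl i) \<Rightarrow> vx i | Inl (Inr i) \<Rightarrow> vx i | Inr x \<Rightarrow> vx x)"

lemma sym_glue_rel: "inv_closed S \<Longrightarrow> sym (glue_rel S)"
proof (rule symI)
  fix x y assume S: "inv_closed S" and "(x, y) \<in> glue_rel S"
  then obtain h where h: "h \<in> S" "x = vx h" "y = vx (iv h)" unfolding glue_rel_def by blast
  have "iv h \<in> S" "iv (iv h) = h" using h(1) S inv_inv unfolding inv_closed_def by auto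
  then show "(y, x) \<in> glue_rel S" unfolding glue_rel_def using h by force
qed

lemma node_vertex_edge:
  assumes S: "inv_closed S" and e: "(u, w) \<in> pface_rel S"
  shows "(node_vertex u, node_vertex w) \<in> (glue_rel S)\<^sup>*"
proof -
  interpret I: face_graph "{1..D}" C "half_col M" "pstep S" by (rule face_graph_pstep[OF S])
  have arc: "(node_vertex (out_node C x), node_vertex (in_node C (pstep S c x))) \<in> (glue_rel S)\<^sup>*"
    if "x \<in> half_col M c \<union> C" for c x
  proof -
    have "x \<in> col_items c" using that unfolding col_items_def .
    then have "node_vertex (in_node C (pstep S c x)) = vx (cross S x)"
      unfolding pstep_def node_vertex_def in_node_def using vx_rot_col cross_in[OF S] by auto
    moreover have "(vx x, vx (cross S x)) \<in> (glue_rel S)\<^sup>*"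
      unfolding cross_def glue_rel_def by (auto intro: r_into_rtrancl)
    ultimately show ?thesis by (simp add: node_vertex_def out_node_def)
  qed
  show ?thesis
  proof (rule I.face_rel_cases[OF e[unfolded pface_rel_def]])
    fix c x assume "c \<in> {1..D}" "x \<in> half_col M c \<union> C" "u = out_node C x" "w = in_node C (pstep S c x)"
    then show ?thesis using arc by simp
  next
    fix c x assume "c \<in> {1..D}" "x \<in> half_col M c \<union> C" "w = out_node C x" "u = in_node C (pstep S c x)"
    then show ?thesis using arc rtrancl_sym[OF sym_glue_rel[OF S]] by blast
  qed
qed

lemma node_vertex_path:
  assumes "inv_closed S" "R \<subseteq> pface_rel S" "(u, w) \<in> R\<^sup>*"
  shows "(node_vertex u, node_vertex w) \<in> (glue_rel S)\<^sup>*"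
proof (rule rtrancl_map[OF _ assms(3)])
  fix p q assume "(p, q) \<in> R"
  then show "(node_vertex p, node_vertex q) \<in> (glue_rel S)\<^sup>*"
    using node_vertex_edge[OF assms(1)] assms(2) by blast
qed

lemma inv_closed_remove:
  assumes S: "inv_closed S" and a: "a \<in> S"
  shows "inv_closed (S - {a, iv a})"
  unfolding inv_closed_def
proof (intro conjI ballI)
  show "S - {a, iv a} \<subseteq> H" using S unfolding inv_closed_def by blast
  fix h assume h: "h \<in> S - {a, iv a}"
  have hH: "h \<in> H" and aH: "a \<in> H" using h a S unfolding inv_closed_def by blast+
  have "iv h \<noteq> a" using h inv_inv[OF hH] by auto
  moreover have "iv h \<noteq> iv a"
  proof
    assume "iv h = iv a"
    then have "h = a" using inv_inv[OF hH] inv_inv[OF aH] by metis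
    then show False using h by simp
  qed
  moreover have "iv h \<in> S" using S h unfolding inv_closed_def by blast
  ultimately show "iv h \<in> S - {a, iv a}" by blast
qed

end

section \<open>Removing one edge does not increase the defect\<close>

text \<open>Fix a glued edge \<open>{a, b}\<close>, \<open>b = iv a\<close>, of colour \<open>c\<close>, and compare the map glued along \<open>S\<close>
  with the map where this edge is cut.  The two face graphs share all arcs except the two arcs
  \<open>e1\<close>, \<open>e2\<close> leaving \<open>a\<close> and \<open>b\<close>: after cutting they return to the vertex they came from
  (heads \<open>ha\<close>, \<open>hb\<close>), before cutting they cross the edge.\<close>

locale edge_removal = cmap_ctx +
  fixes S :: "'a set" and a :: 'a
  assumes S: "inv_closed S" and aS: "a \<in> S"
begin

definition b :: 'a where "b = iv a"
definition S' :: "'a set" where "S' = S - {a, b}"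
definition c :: nat where "c = col a"

lemma aH: "a \<in> H" and bS: "b \<in> S" and bH: "b \<in> H"
  using S aS unfolding inv_closed_def b_def by auto

lemma ab: "a \<noteq> b" and iv_b: "iv b = a"
  using inv_neq[OF aH] inv_inv[OF aH] unfolding b_def by auto

lemma S': "inv_closed S'"
  unfolding S'_def b_def by (rule inv_closed_remove[OF S aS])

lemma card_S: "card S div 2 = card S' div 2 + 1"
proof -
  have eq: "S = insert a (insert b S')" using aS bS unfolding S'_def by blast
  have "finite S'" using S' finH finite_subset unfolding inv_closed_def by blast
  moreover have "a \<notin> insert b S'" "b \<notin> S'" using ab unfolding S'_def by auto
  ultimately have "card (insert a (insert b S')) = card S' + 2" by simp
  then have "card S = card S' + 2" by (subst eq)
  then show ?thesis by simp
qed

lemma c: "c \<in> {1..D}" and a_col: "a \<in> half_col M c" and b_col: "b \<in> half_col M c"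
  and ab_nC: "a \<notin> C" "b \<notin> C"
  using col_in[OF aH] aH bH col_inv[OF aH] HC unfolding c_def half_col_def b_def by auto

sublocale glued: face_graph "{1..D}" C "half_col M" "pstep S" by (rule face_graph_pstep[OF S])
sublocale cut: face_graph "{1..D}" C "half_col M" "pstep S'" by (rule face_graph_pstep[OF S'])

definition e1 :: "nat \<times> 'a" where "e1 = (c, a)"
definition e2 :: "nat \<times> 'a" where "e2 = (c, b)"
definition ha :: "('a + 'a) + 'a" where "ha = in_node C (rot_col M c a)"
definition hb :: "('a + 'a) + 'a" where "hb = in_node C (rot_col M c b)"

definition common :: "((('a + 'a) + 'a) \<times> (('a + 'a) + 'a)) set" where
  "common = edge_rel (cut.arcs - {e1, e2}) cut.arc_tail cut.arc_head"

lemma e12: "e1 \<in> cut.arcs" "e2 \<in> cut.arcs" "e1 \<noteq> e2"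
  unfolding e1_def e2_def cut.arcs_def using c a_col b_col ab by auto

lemma tails: "cut.arc_tail e1 = Inr a" "cut.arc_tail e2 = Inr b"
  unfolding cut.arc_tail_def e1_def e2_def out_node_def using ab_nC by auto

lemma heads: "glued.arc_head e1 = hb" "glued.arc_head e2 = ha" "cut.arc_head e1 = ha" "cut.arc_head e2 = hb"
  unfolding glued.arc_head_def cut.arc_head_def e1_def e2_def
  using aS bS iv_b by (simp_all add: pstep_def ha_def hb_def cross_def S'_def b_def)

lemma heads_agree: "e \<in> cut.arcs - {e1, e2} \<Longrightarrow> glued.arc_head e = cut.arc_head e"
proof -
  assume e: "e \<in> cut.arcs - {e1, e2}"
  then obtain c' x where e': "e = (c', x)" "c' \<in> {1..D}" "x \<in> half_col M c' \<union> C"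
    unfolding cut.arcs_def by blast
  have "c' = c" if x: "x \<in> half_col M c"
  proof -
    have "x \<notin> C" using x HC half_col_sub by blast
    then have "x \<in> half_col M c'" using e'(3) by blast
    then show "c' = c" using x col_half_col by metis
  qed
  then have "x \<noteq> a" "x \<noteq> b"
    using e e'(1) a_col b_col ab_nC e'(3) unfolding e1_def e2_def by auto
  then have "cross S x = cross S' x" unfolding cross_def S'_def by auto
  then show ?thesis unfolding glued.arc_head_def cut.arc_head_def e'(1) pstep_def by simp
qed

lemma arcs_split: "cut.arcs = (cut.arcs - {e1, e2}) \<union> {e1} \<union> {e2}"
  using e12 by blast

lemma cut_face_rel: "pface_rel S' = common \<union> {(Inr a, ha), (ha, Inr a)} \<union> {(Inr b, hb), (hb, Inr b)}"
proof -
  have "pface_rel S' = edge_rel cut.arcs cut.arc_tail cut.arc_head"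
    unfolding pface_rel_def cut.face_rel_def ..
  also have "\<dots> = common \<union> edge_rel {e1} cut.arc_tail cut.arc_head \<union> edge_rel {e2} cut.arc_tail cut.arc_head"
    unfolding common_def by (subst arcs_split) (simp only: edge_rel_union)
  finally show ?thesis by (simp only: edge_rel_single tails heads)
qed

lemma glued_face_rel: "pface_rel S = common \<union> {(Inr a, hb), (hb, Inr a)} \<union> {(Inr b, ha), (ha, Inr b)}"
proof -
  have "pface_rel S = edge_rel cut.arcs cut.arc_tail glued.arc_head"
    unfolding pface_rel_def glued.face_rel_def ..
  also have "\<dots> = edge_rel (cut.arcs - {e1, e2}) cut.arc_tail glued.arc_head
      \<union> edge_rel {e1} cut.arc_tail glued.arc_head \<union> edge_rel {e2} cut.arc_tail glued.arc_head"
    by (subst arcs_split) (simp only: edge_rel_union)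
  also have "edge_rel (cut.arcs - {e1, e2}) cut.arc_tail glued.arc_head = common"
    unfolding common_def by (rule edge_rel_cong) (rule heads_agree)
  finally show ?thesis by (simp only: edge_rel_single tails heads)
qed

lemma glue_rel_split: "glue_rel S = glue_rel S' \<union> {(vx a, vx b), (vx b, vx a)}"
proof -
  have "S = S' \<union> {a, b}" using aS bS unfolding S'_def by blast
  then have "glue_rel S = glue_rel S' \<union> glue_rel {a, b}" unfolding glue_rel_def by blast
  moreover have "glue_rel {a, b} = {(vx a, vx b), (vx b, vx a)}"
    unfolding glue_rel_def using iv_b by (auto simp: b_def)
  ultimately show ?thesis by simp
qed

lemma sym_common: "sym common"
  unfolding common_def by (rule sym_edge_rel)

lemma nodes: "Inr a \<in> pface_nodes" "Inr b \<in> pface_nodes" "ha \<in> pface_nodes" "hb \<in> pface_nodes"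
  and finite_nodes: "finite pface_nodes"
proof -
  show "Inr a \<in> pface_nodes" "Inr b \<in> pface_nodes"
    unfolding pface_nodes_def cut.face_nodes_def using a_col b_col c by blast+
  have "rot_col M c a \<in> half_col M c \<union> C" "rot_col M c b \<in> half_col M c \<union> C"
    using rot_col_bij[THEN bij_betwE] a_col b_col unfolding col_items_def by blast+
  then show "ha \<in> pface_nodes" "hb \<in> pface_nodes"
    unfolding pface_nodes_def ha_def hb_def using cut.in_node_in[OF c] by blast+
  show "finite pface_nodes" unfolding pface_nodes_def cut.face_nodes_def cut.bdry_nodes_def
    using finC finH half_col_sub by (auto intro: finite_subset)
qed

text \<open>By the flow balance, the arc \<open>e1\<close> of the cut map is not a bridge.\<close>

lemma a_not_bridge: "(Inr a, ha) \<in> (common \<union> {(Inr b, hb), (hb, Inr b)})\<^sup>*"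
proof -
  have "common \<union> {(Inr b, hb), (hb, Inr b)} = edge_rel (cut.arcs - {e1}) cut.arc_tail cut.arc_head"
  proof -
    have "cut.arcs - {e1} = (cut.arcs - {e1, e2}) \<union> {e2}" using e12 by blast
    then show ?thesis unfolding common_def by (simp only: edge_rel_union edge_rel_single tails heads)
  qed
  moreover have "2 \<le> card {1..D}" using D2 by simp
  ultimately show ?thesis using cut.arc_not_bridge[of "{e1}" e1] e12 tails heads by simp
qed

lemma ncomp_cut: "ncomp pface_nodes (pface_rel S') = ncomp pface_nodes (common \<union> {(Inr b, hb), (hb, Inr b)})"
proof -
  have "sym (common \<union> {(Inr b, hb), (hb, Inr b)})" using sym_common unfolding sym_def by blast
  moreover have "pface_rel S' = (common \<union> {(Inr b, hb), (hb, Inr b)}) \<union> {(Inr a, ha), (ha, Inr a)}"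
    unfolding cut_face_rel by blast
  ultimately show ?thesis using ncomp_add_conn a_not_bridge by metis
qed

lemma common_sub_cut: "common \<subseteq> pface_rel S'"
  unfolding cut_face_rel by blast

text \<open>If the edge closes a cycle of glued edges, the vertex components do not change and the face
  graph loses at most one component.\<close>

lemma defect_step_cycle:
  assumes cyc: "(vx a, vx b) \<in> (glue_rel S')\<^sup>*"
  shows "defect S' \<le> defect S"
proof -
  have glue: "glue_comps S = glue_comps S'"
    unfolding glue_comps_def glue_rel_split using ncomp_add_conn[OF sym_glue_rel[OF S'] cyc] by simp
  have "ncomp pface_nodes (pface_rel S) \<le> ncomp pface_nodes common"
    by (rule ncomp_mono[OF sym_common _ finite_nodes]) (auto simp: glued_face_rel)
  also have "\<dots> \<le> ncomp pface_nodes (common \<union> {(Inr b, hb), (hb, Inr b)}) + 1"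
  proof (cases "(Inr b, hb) \<in> common\<^sup>*")
    case True then show ?thesis using ncomp_add_conn[OF sym_common True] by simp
  next
    case False then show ?thesis using ncomp_add_disc[OF sym_common False nodes(2,4) finite_nodes] by simp
  qed
  finally show ?thesis unfolding defect_def S'_def[symmetric] b_def[symmetric]
    using glue card_S ncomp_cut by simp
qed

text \<open>If the edge joins two vertex components, the cut map separates \<open>a\<close> from \<open>b\<close>; then the arc
  \<open>e2\<close> is not a bridge either, and re-gluing merges two face components.\<close>

lemma defect_step_bridge:
  assumes sep: "(vx a, vx b) \<notin> (glue_rel S')\<^sup>*"
  shows "defect S' \<le> defect S"
proof -
  have glue: "glue_comps S' = glue_comps S + 1"
    unfolding glue_comps_def glue_rel_split
    using ncomp_add_disc[OF sym_glue_rel[OF S'] sep vx_in vx_in finV] aH bH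
    unfolding cm_items_def by blast
  have at_a: "node_vertex (Inr a) = vx a" "node_vertex ha = vx a" "node_vertex hb = vx b"
    unfolding ha_def hb_def node_vertex_def in_node_def
    using vx_rot_col a_col b_col unfolding col_items_def by auto
  have away: "(Inr b, n) \<notin> common\<^sup>*" if "node_vertex n = vx a" for n
  proof
    assume "(Inr b, n) \<in> common\<^sup>*"
    then have "(vx b, vx a) \<in> (glue_rel S')\<^sup>*"
      using node_vertex_path[OF S' common_sub_cut] that by (force simp: node_vertex_def)
    then show False using sep rtrancl_sym[OF sym_glue_rel[OF S']] by blast
  qed
  have b_path: "(Inr b, hb) \<in> common\<^sup>*"
  proof -
    have "2 \<le> card {1..D}" using D2 by simp
    moreover have "{e1, e2} \<subseteq> cut.arcs" "e2 \<in> {e1, e2}" using e12 by auto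
    moreover have "(cut.arc_tail e2, cut.arc_tail e') \<notin> common\<^sup>* \<and>
        (cut.arc_tail e2, cut.arc_head e') \<notin> common\<^sup>*" if "e' \<in> {e1, e2} - {e2}" for e'
      using that e12 tails heads away at_a by auto
    ultimately show ?thesis using cut.arc_not_bridge[OF _ _ _ common_def] tails heads by metis
  qed
  have a_hb: "(Inr a, hb) \<notin> common\<^sup>*"
  proof
    assume "(Inr a, hb) \<in> common\<^sup>*"
    then have "(Inr b, Inr a) \<in> common\<^sup>*"
      using b_path rtrancl_sym[OF sym_common] by (meson rtrancl_trans)
    then show False using away at_a(1) by blast
  qed
  have "ncomp pface_nodes (pface_rel S) \<le> ncomp pface_nodes (common \<union> {(Inr a, hb), (hb, Inr a)})"
    by (rule ncomp_mono) (use sym_common finite_nodes in \<open>auto simp: glued_face_rel sym_def\<close>)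
  moreover have "ncomp pface_nodes common = ncomp pface_nodes (common \<union> {(Inr a, hb), (hb, Inr a)}) + 1"
    using ncomp_add_disc[OF sym_common a_hb nodes(1,4) finite_nodes] .
  moreover have "ncomp pface_nodes (pface_rel S') = ncomp pface_nodes common"
    using ncomp_cut ncomp_add_conn[OF sym_common b_path] by simp
  ultimately have "ncomp pface_nodes (pface_rel S) + 1 \<le> ncomp pface_nodes (pface_rel S')" by simp
  then show ?thesis unfolding defect_def S'_def[symmetric] b_def[symmetric]
    using glue card_S by simp
qed

theorem defect_step: "defect (S - {a, iv a}) \<le> defect S"
  using defect_step_cycle defect_step_bridge unfolding S'_def b_def by blast

end

context cmap_ctx
begin

lemma defect_nonneg: "inv_closed S \<Longrightarrow> 0 \<le> defect S"
proof (induction "card S" arbitrary: S rule: less_induct)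
  case less
  show ?case
  proof (cases "S = {}")
    case True then show ?thesis using defect_empty by simp
  next
    case False
    then obtain a where a: "a \<in> S" by blast
    interpret edge_removal D M S a by unfold_locales (fact less.prems a)+
    have "finite S" using less.prems finH finite_subset unfolding inv_closed_def by blast
    then have "card (S - {a, iv a}) < card S" using a by (intro psubset_card_mono) auto
    then have "0 \<le> defect (S - {a, iv a})"
      using less.hyps inv_closed_remove[OF less.prems a] by blast
    also have "\<dots> \<le> defect S" by (rule defect_step)
    finally show ?thesis .
  qed
qed

text \<open>For the fully glued map the defect is exactly the slack of the claimed inequality.\<close>

theorem main_inequality:
  assumes "connected_cmap M"
  shows "- (int D - 1) * int (nE M) + int (F_int D M)
         \<le> int D - (int D - 1) * int (nP M) - int (bdry_components D M)
            - (int D - 2) * (int (nE M) - int (nV M) + 1)"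
proof -
  have "0 \<le> defect H" by (rule defect_nonneg[OF inv_closed_H])
  moreover have "defect H = int D - (int D - 1) * int (nP M) - int (bdry_components D M)
      - (int D - 2) * (int (nE M) - int (nV M) + 1) - (- (int D - 1) * int (nE M) + int (F_int D M))"
    unfolding defect_def glue_comps_H[OF assms] nE_def[symmetric]
    using full_gluing_components by (simp add: algebra_simps)
  ultimately show ?thesis by linarith
qed

end

text \<open>The statement for ciliated maps with \<open>D \<ge> 3\<close> colours (the argument needs only \<open>D \<ge> 2\<close>).\<close>

theorem lemma1:
  fixes D :: nat and M :: "('a, 'v) cmap"
  assumes "D \<ge> 3" and "ciliated_map D M" and "connected_cmap M"
  shows "- (int D - 1) * int (nE M) + int (F_int D M)
         \<le> int D - (int D - 1) * int (nP M) - int (bdry_components D M)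
            - (int D - 2) * (int (nE M) - int (nV M) + 1)"
proof -
  interpret cmap_ctx D M using assms(1,2) by unfold_locales auto
  show ?thesis using main_inequality[OF assms(3)] .
qed

end
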